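(* Let $N\geq2$ and $0<s\leq1$ with $2s<N$. Define, for real $t$, $\Phi(t):=|\mathbb{S}^{N-2}|\int_{-1}^1\frac{(1-u^2)^{\frac{N-3}{2}}}{(1+t^2-2tu)^{N/2-s}}du$, with the convention $|\mathbb{S}^0|=2$. Then: (i) $\Phi:(-1,1)\to\mathbb{R}_+$ is analytic. (ii) There exist smooth functions $\phi_1,\phi_2:(0,\sqrt2)\to\mathbb{R}$ such that for all $t\in(0,1)$, $\Phi(t)=\phi_1(t)+K_{2s}(1-t)\phi_2(t)$, where $K_{2s}(t)=|t|^{2s-1}$ if $s\neq1/2$ and $K_{2s}(t)=\log|t|$ if $s=1/2$. (iii) For all $t>0$, $\Phi(t^{-1})=t^{N-2s}\Phi(t)$.
   Context: $|\mathbb{S}^{N-2}|$ denotes the surface measure of the unit sphere in $\mathbb{R}^{N-1}$. *)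

theory Defs
  imports "HOL-Analysis.Analysis"
begin

text \<open>Surface measure of the unit sphere S^(n-1) in R^n: 2 pi^(n/2) / Gamma(n/2).
  For n = 1 this gives 2, i.e. the convention |S^0| = 2.\<close>
definition sphere_measure :: "nat \<Rightarrow> real" where
  "sphere_measure n = 2 * pi powr (real n / 2) / Gamma (real n / 2)"

definition Phi :: "nat \<Rightarrow> real \<Rightarrow> real \<Rightarrow> real" where
  "Phi N s t = sphere_measure (N - 1) *
     integral {-1..1} (\<lambda>u. (1 - u\<^sup>2) powr ((real N - 3) / 2)
                          / (1 + t\<^sup>2 - 2 * t * u) powr (real N / 2 - s))"

definition real_analytic_on :: "(real \<Rightarrow> real) \<Rightarrow> real set \<Rightarrow> bool" where
  "real_analytic_on f S \<longleftrightarrow>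
     (\<forall>x0\<in>S. \<exists>r>0. \<exists>a::nat \<Rightarrow> real.
        \<forall>x. \<bar>x - x0\<bar> < r \<longrightarrow> (\<lambda>n. a n * (x - x0) ^ n) sums f x)"

definition smooth_on :: "(real \<Rightarrow> real) \<Rightarrow> real set \<Rightarrow> bool" where
  "smooth_on f S \<longleftrightarrow>
     (\<exists>D :: nat \<Rightarrow> real \<Rightarrow> real. D 0 = f \<and>
        (\<forall>n. \<forall>x\<in>S. (D n has_real_derivative D (Suc n) x) (at x)))"

definition K :: "real \<Rightarrow> real \<Rightarrow> real" where
  "K s t = (if s = 1/2 then ln \<bar>t\<bar> else \<bar>t\<bar> powr (2 * s - 1))"

end

theory Submission
  imports Defs "HOL-Complex_Analysis.Complex_Analysis" "HOL-Real_Asymp.Real_Asymp"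
begin

text \<open>Substituting \<open>u = cos \<theta>\<close> and expanding \<open>(1 - z cos \<theta>)\<^bsup>-a\<^esup>\<close>, \<open>a = N/2 - s\<close>, binomially,
  the moments of \<open>sin\<^bsup>N-2\<^esup> \<theta> cos\<^sup>k \<theta>\<close> turn \<open>\<Phi>\<close> into
  \<open>\<Phi>(t) = C (1 + t\<^sup>2)\<^bsup>-a\<^esup> F(a/2, (a+1)/2; N/2; (2t/(1+t\<^sup>2))\<^sup>2)\<close> for \<open>|t| < 1\<close>, with the Gauss
  hypergeometric function \<open>F\<close>. Since \<open>F\<close> is holomorphic on the unit disc with positive
  coefficients, \<open>\<Phi>\<close> is real analytic and positive on \<open>(-1, 1)\<close>. Near \<open>t = 1\<close> the argument
  tends to \<open>1\<close>, and the connection formula expressing \<open>F(A, B; C; 1 - r)\<close> through the two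
  Frobenius solutions at \<open>r = 0\<close> of the hypergeometric equation (obtained from Abel's
  identity for their Wronskian) produces the singular factor \<open>r\<^bsup>s-1/2\<^esup>\<close>, or \<open>log r\<close> when \<open>s = 1/2\<close>,
  with \<open>r = ((1 - t) q(t))\<^sup>2\<close>. The inversion formula follows from
  \<open>1 + t\<^sup>-\<^sup>2 - 2 t\<^sup>-\<^sup>1 u = t\<^sup>-\<^sup>2 (1 + t\<^sup>2 - 2 t u)\<close>.\<close>

section \<open>Gauss hypergeometric series\<close>

definition hyp_coeff :: "real \<Rightarrow> real \<Rightarrow> real \<Rightarrow> nat \<Rightarrow> real" where
  "hyp_coeff a b c n = pochhammer a n * pochhammer b n / (pochhammer c n * fact n)"

definition hyp_coeffs :: "real \<Rightarrow> real \<Rightarrow> real \<Rightarrow> nat \<Rightarrow> complex" where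
  "hyp_coeffs a b c n = complex_of_real (hyp_coeff a b c n)"

definition pser :: "(nat \<Rightarrow> complex) \<Rightarrow> complex \<Rightarrow> complex" where
  "pser f z = (\<Sum>n. f n * z ^ n)"

definition hyp2F1 :: "real \<Rightarrow> real \<Rightarrow> real \<Rightarrow> complex \<Rightarrow> complex" where
  "hyp2F1 a b c = pser (hyp_coeffs a b c)"

lemma hyp_coeff_0 [simp]: "hyp_coeff a b c 0 = 1"
  by (simp add: hyp_coeff_def)

lemma hyp_coeff_pos: "a > 0 \<Longrightarrow> b > 0 \<Longrightarrow> c > 0 \<Longrightarrow> hyp_coeff a b c n > 0"
  by (simp add: hyp_coeff_def pochhammer_pos)

lemma hyp_coeff_Suc:
  assumes "c > 0"
  shows "hyp_coeff a b c (Suc n) = hyp_coeff a b c n * ((a + n) * (b + n)) / ((c + n) * (n + 1))"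
proof -
  have "pochhammer c n > 0" "c + n > 0" using assms by (simp_all add: pochhammer_pos)
  then show ?thesis by (simp add: hyp_coeff_def pochhammer_Suc field_simps)
qed

lemma hyp_coeff_rec:
  assumes "c > 0"
  shows "(n + 1) * (c + n) * hyp_coeff a b c (Suc n) = (a + n) * (b + n) * hyp_coeff a b c n"
proof -
  have "(c + n) * (n + 1) \<noteq> 0" using assms by simp
  then show ?thesis by (simp only: hyp_coeff_Suc[OF assms]) (simp add: field_simps)
qed

lemma hyp_coeffs_rec:
  assumes "c > 0"
  shows "(of_nat n + 1) * (of_real c + of_nat n) * hyp_coeffs a b c (Suc n) =
         (of_real a + of_nat n) * (of_real b + of_nat n) * hyp_coeffs a b c n"
  using arg_cong[OF hyp_coeff_rec[OF assms, of n a b], of complex_of_real]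
  by (simp add: hyp_coeffs_def)

lemma conv_radius_hyp_coeffs:
  assumes "a > 0" "b > 0" "c > 0"
  shows "conv_radius (hyp_coeffs a b c) = 1"
proof (rule conv_radius_ratio_limit_nonzero[where c = 1])
  have "norm (hyp_coeffs a b c n) / norm (hyp_coeffs a b c (Suc n))
      = (c + n) * (real n + 1) / ((a + n) * (b + n))" for n
  proof -
    have "hyp_coeff a b c n > 0" "hyp_coeff a b c (Suc n) > 0"
      using hyp_coeff_pos assms by blast+
    moreover have "(a + n) * (b + n) > 0" "(c + n) * (n + 1) > 0" using assms by simp_all
    ultimately show ?thesis
      using assms by (simp only: hyp_coeffs_def norm_of_real abs_of_pos hyp_coeff_Suc) (simp add: field_simps)
  qed
  moreover have "(\<lambda>n. (c + n) * (n + 1) / ((a + n) * (b + n))) \<longlonglongrightarrow> 1"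
    by real_asymp
  ultimately show "(\<lambda>n. norm (hyp_coeffs a b c n) / norm (hyp_coeffs a b c (Suc n))) \<longlonglongrightarrow> 1"
    by simp
qed simp_all

lemma summable_hyp_coeffs:
  "a > 0 \<Longrightarrow> b > 0 \<Longrightarrow> c > 0 \<Longrightarrow> norm z < 1 \<Longrightarrow> summable (\<lambda>n. hyp_coeffs a b c n * z ^ n)"
  by (rule summable_in_conv_radius) (simp add: conv_radius_hyp_coeffs)

lemma pser_0 [simp]: "pser f 0 = f 0"
  unfolding pser_def by (rule powser_zero)

lemma hyp2F1_0 [simp]: "hyp2F1 a b c 0 = 1"
  by (simp add: hyp2F1_def hyp_coeffs_def)

lemma pser_sums:
  "summable (\<lambda>n. f n * z ^ n) \<Longrightarrow> (\<lambda>n. f n * z ^ n) sums pser f z"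
  unfolding pser_def by (simp add: summable_sums)

lemma has_field_derivative_pser:
  assumes "\<And>z. norm z < 1 \<Longrightarrow> summable (\<lambda>n. f n * z ^ n)" "norm z < 1"
  shows "(pser f has_field_derivative pser (diffs f) z) (at z)"
  unfolding pser_def by (rule termdiffs_strong'[OF assms])

lemma summable_diffs:
  fixes f :: "nat \<Rightarrow> complex"
  assumes "\<And>z. norm z < 1 \<Longrightarrow> summable (\<lambda>n. f n * z ^ n)" "norm z < 1"
  shows "summable (\<lambda>n. diffs f n * z ^ n)"
  using termdiff_converges[of z 1 f] assms by blast

lemma holomorphic_on_pser:
  assumes "\<And>z. norm z < 1 \<Longrightarrow> summable (\<lambda>n. f n * z ^ n)"
  shows "pser f holomorphic_on ball 0 1"
  unfolding holomorphic_on_def field_differentiable_def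
  using has_field_derivative_pser[OF assms] has_field_derivative_at_within by (metis mem_ball_0)

lemma continuous_on_pser:
  "(\<And>z. norm z < 1 \<Longrightarrow> summable (\<lambda>n. f n * z ^ n)) \<Longrightarrow> S \<subseteq> ball 0 1 \<Longrightarrow> continuous_on S (pser f)"
  by (metis holomorphic_on_imp_continuous_on holomorphic_on_pser holomorphic_on_subset)

lemma sums_mult_var_shift:
  fixes z :: complex
  assumes "(\<lambda>n. f n * z ^ n) sums S"
  shows "(\<lambda>n. (if n = 0 then 0 else f (n - 1)) * z ^ n) sums (z * S)"
proof -
  have "(\<lambda>n. z * (f n * z ^ n)) sums (z * S)" by (rule sums_mult[OF assms])
  then have "(\<lambda>n. (if Suc n = 0 then 0 else f (Suc n - 1)) * z ^ Suc n) sums (z * S)"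
    by (simp add: mult_ac)
  then show ?thesis by (subst (asm) sums_Suc_iff) simp
qed

lemma pser_diffs_sums:
  fixes f :: "nat \<Rightarrow> complex"
  assumes sm: "\<And>z. norm z < 1 \<Longrightarrow> summable (\<lambda>n. f n * z ^ n)" and z: "norm z < 1"
  shows "(\<lambda>n. ((of_nat n + 1) * f (Suc n)) * z ^ n) sums pser (diffs f) z"
    and "(\<lambda>n. (of_nat n * f n) * z ^ n) sums (z * pser (diffs f) z)"
proof -
  have s: "(\<lambda>n. diffs f n * z ^ n) sums pser (diffs f) z"
    by (rule pser_sums[OF summable_diffs[OF sm z]])
  then show "(\<lambda>n. ((of_nat n + 1) * f (Suc n)) * z ^ n) sums pser (diffs f) z"
    by (simp add: diffs_def algebra_simps)
  have "(if n = 0 then 0 else diffs f (n - 1)) = of_nat n * f n" for n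
    by (cases n) (simp_all add: diffs_def algebra_simps)
  then show "(\<lambda>n. (of_nat n * f n) * z ^ n) sums (z * pser (diffs f) z)"
    using sums_mult_var_shift[OF s] by simp
qed

section \<open>The hypergeometric differential equation\<close>

definition hyp_operator ::
    "complex \<Rightarrow> complex \<Rightarrow> complex \<Rightarrow> complex \<Rightarrow> complex \<Rightarrow> complex \<Rightarrow> complex \<Rightarrow> complex" where
  "hyp_operator a b c z y y' y'' = z * (1 - z) * y'' + (c - (a + b + 1) * z) * y' - a * b * y"

definition hyp_ode_solution :: "complex \<Rightarrow> complex \<Rightarrow> complex \<Rightarrow> (complex \<Rightarrow> complex) \<Rightarrow>
    (complex \<Rightarrow> complex) \<Rightarrow> (complex \<Rightarrow> complex) \<Rightarrow> complex set \<Rightarrow> bool" where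
  "hyp_ode_solution a b c y y' y'' S \<longleftrightarrow> (\<forall>z\<in>S. (y has_field_derivative y' z) (at z) \<and>
      (y' has_field_derivative y'' z) (at z) \<and> hyp_operator a b c z (y z) (y' z) (y'' z) = 0)"

lemma hyp_ode_solution_subset:
  "hyp_ode_solution a b c y y' y'' S \<Longrightarrow> T \<subseteq> S \<Longrightarrow> hyp_ode_solution a b c y y' y'' T"
  unfolding hyp_ode_solution_def by blast

text \<open>Comparing coefficients: the ODE applied to a power series is the series whose
  coefficients are the two sides of the hypergeometric recurrence.\<close>
lemma hyp_operator_pser_sums:
  fixes a b c :: real and f :: "nat \<Rightarrow> complex"
  assumes sm: "\<And>z. norm z < 1 \<Longrightarrow> summable (\<lambda>n. f n * z ^ n)" and z: "norm z < 1"
  shows "(\<lambda>n. ((of_nat n + 1) * (of_real c + of_nat n) * f (Suc n)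
              - (of_real a + of_nat n) * (of_real b + of_nat n) * f n) * z ^ n) sums
         hyp_operator a b c z (pser f z) (pser (diffs f) z) (pser (diffs (diffs f)) z)"
proof -
  define F F1 F2 where "F = pser f z" "F1 = pser (diffs f) z" "F2 = pser (diffs (diffs f)) z"
  have smd: "\<And>z. norm z < 1 \<Longrightarrow> summable (\<lambda>n. diffs f n * z ^ n)"
    using summable_diffs[OF sm] by blast
  have s0: "(\<lambda>n. f n * z ^ n) sums F" unfolding F_F1_F2_def by (rule pser_sums[OF sm[OF z]])
  note s1 = pser_diffs_sums[OF sm z, folded F_F1_F2_def]
  have s2z: "(\<lambda>n. (of_nat n * (of_nat n + 1) * f (Suc n)) * z ^ n) sums (z * F2)"
    using pser_diffs_sums(2)[OF smd z, folded F_F1_F2_def] by (simp add: diffs_def algebra_simps)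
  have "(if n = 0 then 0 else of_nat (n - 1) * (of_nat (n - 1) + 1) * f (Suc (n - 1)))
          = (of_nat n * (of_nat n - 1) * f n :: complex)" for n
    by (cases n) (simp_all add: algebra_simps)
  then have s2zz: "(\<lambda>n. (of_nat n * (of_nat n - 1) * f n) * z ^ n) sums (z * (z * F2))"
    using sums_mult_var_shift[OF s2z] by simp
  have "(\<lambda>n. ((of_nat n * (of_nat n + 1) * f (Suc n)) * z ^ n + of_real c * (((of_nat n + 1) * f (Suc n)) * z ^ n))
      - ((of_nat n * (of_nat n - 1) * f n) * z ^ n + (of_real a + of_real b + 1) * ((of_nat n * f n) * z ^ n)
         + of_real a * of_real b * (f n * z ^ n)))
     sums ((z * F2 + of_real c * F1) - (z * (z * F2) + (of_real a + of_real b + 1) * (z * F1) + of_real a * of_real b * F))"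
    by (intro sums_diff sums_add sums_mult s2z s1 s2zz s0)
  then show ?thesis
    unfolding F_F1_F2_def hyp_operator_def by (simp add: algebra_simps)
qed

lemma hyp2F1_ode_solution:
  assumes "a > 0" "b > 0" "c > 0"
  shows "hyp_ode_solution a b c (hyp2F1 a b c) (pser (diffs (hyp_coeffs a b c)))
           (pser (diffs (diffs (hyp_coeffs a b c)))) (ball 0 1)"
  unfolding hyp_ode_solution_def
proof safe
  fix z :: complex assume "z \<in> ball 0 1"
  then have z: "norm z < 1" by simp
  have sm: "\<And>z. norm z < 1 \<Longrightarrow> summable (\<lambda>n. hyp_coeffs a b c n * z ^ n)"
    using summable_hyp_coeffs assms by blast
  show "(hyp2F1 a b c has_field_derivative pser (diffs (hyp_coeffs a b c)) z) (at z)"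
    unfolding hyp2F1_def by (rule has_field_derivative_pser[OF sm z])
  show "(pser (diffs (hyp_coeffs a b c)) has_field_derivative pser (diffs (diffs (hyp_coeffs a b c))) z) (at z)"
    by (rule has_field_derivative_pser[OF summable_diffs[OF sm] z])
  have "(\<lambda>n. 0) sums hyp_operator a b c z (hyp2F1 a b c z)
      (pser (diffs (hyp_coeffs a b c)) z) (pser (diffs (diffs (hyp_coeffs a b c))) z)"
    using hyp_operator_pser_sums[OF sm z, of c a b] hyp_coeffs_rec[OF assms(3)]
    by (simp add: hyp2F1_def)
  then show "hyp_operator a b c z (hyp2F1 a b c z)
      (pser (diffs (hyp_coeffs a b c)) z) (pser (diffs (diffs (hyp_coeffs a b c))) z) = 0"
    using sums_unique2 sums_zero by blast
qed

lemma holomorphic_on_hyp2F1: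
  "a > 0 \<Longrightarrow> b > 0 \<Longrightarrow> c > 0 \<Longrightarrow> hyp2F1 a b c holomorphic_on ball 0 1"
  unfolding hyp2F1_def by (rule holomorphic_on_pser) (rule summable_hyp_coeffs)

lemma hyp_ode_solution_reflect:
  assumes "hyp_ode_solution a b c y y' y'' S" "\<And>z. z \<in> T \<Longrightarrow> 1 - z \<in> S"
  shows "hyp_ode_solution a b (a + b + 1 - c) (\<lambda>z. y (1 - z)) (\<lambda>z. - y' (1 - z)) (\<lambda>z. y'' (1 - z)) T"
  unfolding hyp_ode_solution_def
proof safe
  fix z assume "z \<in> T"
  then have d1: "(y has_field_derivative y' (1 - z)) (at (1 - z))"
   and d2: "(y' has_field_derivative y'' (1 - z)) (at (1 - z))"
   and e: "hyp_operator a b c (1 - z) (y (1 - z)) (y' (1 - z)) (y'' (1 - z)) = 0"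
    using assms unfolding hyp_ode_solution_def by auto
  have dm: "((\<lambda>z. 1 - z) has_field_derivative -1) (at z)"
    by (auto intro!: derivative_eq_intros)
  show "((\<lambda>z. y (1 - z)) has_field_derivative - y' (1 - z)) (at z)"
    using DERIV_chain2[OF d1 dm] by simp
  show "((\<lambda>z. - y' (1 - z)) has_field_derivative y'' (1 - z)) (at z)"
    using DERIV_minus[OF DERIV_chain2[OF d2 dm]] by simp
  show "hyp_operator a b (a + b + 1 - c) z (y (1 - z)) (- y' (1 - z)) (y'' (1 - z)) = 0"
    using e by (simp add: hyp_operator_def algebra_simps)
qed

text \<open>Passing to the second characteristic exponent \<open>1 - c\<close> at \<open>0\<close>.\<close>
lemma hyp_ode_solution_gauge:
  assumes sol: "hyp_ode_solution (a - c + 1) (b - c + 1) (2 - c) F F' F'' S"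
    and S: "\<And>z. z \<in> S \<Longrightarrow> z \<notin> \<real>\<^sub>\<le>\<^sub>0"
  shows "hyp_ode_solution a b c (\<lambda>z. z powr (1 - c) * F z)
     (\<lambda>z. (1 - c) * z powr (- c) * F z + z powr (1 - c) * F' z)
     (\<lambda>z. (1 - c) * (- c) * z powr (- c - 1) * F z + 2 * (1 - c) * z powr (- c) * F' z
          + z powr (1 - c) * F'' z) S"
  unfolding hyp_ode_solution_def
proof safe
  fix z assume zS: "z \<in> S"
  have z: "z \<notin> \<real>\<^sub>\<le>\<^sub>0" using S zS by blast
  then have z0: "z \<noteq> 0" by auto
  have d1: "(F has_field_derivative F' z) (at z)" and d2: "(F' has_field_derivative F'' z) (at z)"
   and e: "hyp_operator (a - c + 1) (b - c + 1) (2 - c) z (F z) (F' z) (F'' z) = 0"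
    using sol zS unfolding hyp_ode_solution_def by auto
  have p1: "((\<lambda>z. z powr (1 - c)) has_field_derivative (1 - c) * z powr (- c)) (at z)"
    using has_field_derivative_powr[OF z, of "1 - c"] by simp
  have p2: "((\<lambda>z. z powr (- c)) has_field_derivative (- c) * z powr (- c - 1)) (at z)"
    using has_field_derivative_powr[OF z, of "- c"] by simp
  show "((\<lambda>z. z powr (1 - c) * F z) has_field_derivative
      (1 - c) * z powr (- c) * F z + z powr (1 - c) * F' z) (at z)"
    by (rule DERIV_cong[OF DERIV_mult[OF p1 d1]]) (simp add: algebra_simps)
  show "((\<lambda>z. (1 - c) * z powr (- c) * F z + z powr (1 - c) * F' z) has_field_derivative
      (1 - c) * (- c) * z powr (- c - 1) * F z + 2 * (1 - c) * z powr (- c) * F' z + z powr (1 - c) * F'' z) (at z)"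
    using DERIV_add[OF DERIV_cmult[OF DERIV_mult[OF p2 d1], of "1 - c"] DERIV_mult[OF p1 d2]]
    by (simp add: algebra_simps)
  define P where "P = z powr (- c)"
  have q1: "z powr (1 - c) = z * P" unfolding P_def using powr_add[of z 1 "- c"] by simp
  have q2: "z powr (- c - 1) = P / z" unfolding P_def using powr_diff[of z "- c" 1] by simp
  have "hyp_operator a b c z (z powr (1 - c) * F z) ((1 - c) * z powr (- c) * F z + z powr (1 - c) * F' z)
      ((1 - c) * (- c) * z powr (- c - 1) * F z + 2 * (1 - c) * z powr (- c) * F' z + z powr (1 - c) * F'' z)
     = z * P * hyp_operator (a - c + 1) (b - c + 1) (2 - c) z (F z) (F' z) (F'' z)"
    unfolding q1 q2 P_def[symmetric] hyp_operator_def using z0 by (simp add: field_simps)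
  then show "hyp_operator a b c z (z powr (1 - c) * F z) ((1 - c) * z powr (- c) * F z + z powr (1 - c) * F' z)
      ((1 - c) * (- c) * z powr (- c - 1) * F z + 2 * (1 - c) * z powr (- c) * F' z + z powr (1 - c) * F'' z) = 0"
    using e by simp
qed

lemma has_field_derivative_powr_weight:
  fixes z c e :: complex
  assumes "z \<notin> \<real>\<^sub>\<le>\<^sub>0" "1 - z \<notin> \<real>\<^sub>\<le>\<^sub>0"
  shows "((\<lambda>z. z powr c * (1 - z) powr e) has_field_derivative
           (z powr c * (1 - z) powr e) * (c - (c + e) * z) / (z * (1 - z))) (at z)"
proof -
  have z0: "z \<noteq> 0" "1 - z \<noteq> 0" using assms by auto
  have d1: "((\<lambda>z. z powr c) has_field_derivative c * z powr (c - 1)) (at z)"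
    by (rule has_field_derivative_powr[OF assms(1)])
  have d2: "((\<lambda>z. (1 - z) powr e) has_field_derivative e * (1 - z) powr (e - 1) * (- 1)) (at z)"
    by (rule DERIV_chain2[where f="\<lambda>w. w powr e" and g="\<lambda>z. 1 - z", OF has_field_derivative_powr[OF assms(2)]])
       (auto intro!: derivative_eq_intros)
  have q1: "z powr (c - 1) = z powr c / z" using powr_diff[of z c 1] by simp
  have q2: "(1 - z) powr (e - 1) = (1 - z) powr e / (1 - z)" using powr_diff[of "1 - z" e 1] by simp
  show ?thesis
    by (rule DERIV_cong[OF DERIV_mult[OF d1 d2]]) (use z0 in \<open>simp add: q1 q2 field_simps\<close>)
qed

text \<open>Abel's identity: \<open>z\<^sup>c (1 - z)\<^bsup>a+b+1-c\<^esup>\<close> is an integrating factor for the Wronskian.\<close>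
lemma hyp_ode_wronskian_constant:
  assumes S: "convex S"
    and sy: "hyp_ode_solution a b c y y' y'' S" and sf: "hyp_ode_solution a b c f f' f'' S"
    and nz: "\<And>z. z \<in> S \<Longrightarrow> z * (1 - z) \<noteq> 0"
    and \<mu>: "\<And>z. z \<in> S \<Longrightarrow> (\<mu> has_field_derivative \<mu> z * (c - (a + b + 1) * z) / (z * (1 - z))) (at z)"
  shows "\<exists>k. \<forall>z\<in>S. (y z * f' z - y' z * f z) * \<mu> z = k"
proof -
  have "\<exists>k. \<forall>z\<in>S. (\<lambda>z. (y z * f' z - y' z * f z) * \<mu> z) z = k"
  proof (rule has_field_derivative_zero_constant[OF S])
    fix z assume z: "z \<in> S"
    have dy: "(y has_field_derivative y' z) (at z)" and dy': "(y' has_field_derivative y'' z) (at z)"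
     and ey: "hyp_operator a b c z (y z) (y' z) (y'' z) = 0"
     and df: "(f has_field_derivative f' z) (at z)" and df': "(f' has_field_derivative f'' z) (at z)"
     and ef: "hyp_operator a b c z (f z) (f' z) (f'' z) = 0"
      using sy sf z unfolding hyp_ode_solution_def by auto
    define D where "D = z * (1 - z)"
    have D0: "D \<noteq> 0" using nz z D_def by simp
    have y'': "D * y'' z = a * b * y z - (c - (a + b + 1) * z) * y' z"
     and f'': "D * f'' z = a * b * f z - (c - (a + b + 1) * z) * f' z"
      using ey ef unfolding D_def hyp_operator_def by (simp_all add: algebra_simps)
    have "D * ((y' z * f' z + y z * f'' z - (y'' z * f z + y' z * f' z)) * \<mu> z +
        (y z * f' z - y' z * f z) * (\<mu> z * (c - (a + b + 1) * z) / D)) =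
        \<mu> z * (y z * (D * f'' z) - (D * y'' z) * f z + (y z * f' z - y' z * f z) * (c - (a + b + 1) * z))"
      using D0 by (simp add: field_simps)
    also have "\<dots> = 0" unfolding y'' f'' by (simp add: algebra_simps)
    finally have "(y' z * f' z + y z * f'' z - (y'' z * f z + y' z * f' z)) * \<mu> z +
        (y z * f' z - y' z * f z) * (\<mu> z * (c - (a + b + 1) * z) / (z * (1 - z))) = 0"
      using D0 unfolding D_def by simp
    moreover have "((\<lambda>z. (y z * f' z - y' z * f z) * \<mu> z) has_field_derivative
        (y' z * f' z + y z * f'' z - (y'' z * f z + y' z * f' z)) * \<mu> z +
        (y z * f' z - y' z * f z) * (\<mu> z * (c - (a + b + 1) * z) / (z * (1 - z)))) (at z)"
      by (rule DERIV_cong[OF DERIV_mult[OF DERIV_diff[OF DERIV_mult[OF dy df'] DERIV_mult[OF dy' df]] \<mu>[OF z]]])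
         (simp add: algebra_simps)
    ultimately show "((\<lambda>z. (y z * f' z - y' z * f z) * \<mu> z) has_field_derivative 0) (at z within S)"
      by (simp add: has_field_derivative_at_within)
  qed
  then show ?thesis by simp
qed

lemma hyp_ode_solution_span:
  assumes S: "convex S"
    and sg: "hyp_ode_solution a b c g g' g'' S"
    and s1: "hyp_ode_solution a b c f1 f1' f1'' S" and s2: "hyp_ode_solution a b c f2 f2' f2'' S"
    and nz: "\<And>z. z \<in> S \<Longrightarrow> z * (1 - z) \<noteq> 0"
    and \<mu>: "\<And>z. z \<in> S \<Longrightarrow> (\<mu> has_field_derivative \<mu> z * (c - (a + b + 1) * z) / (z * (1 - z))) (at z)"
    and W: "\<And>z. z \<in> S \<Longrightarrow> (f1 z * f2' z - f1' z * f2 z) * \<mu> z = k" and k: "k \<noteq> 0"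
  shows "\<exists>k1 k2. \<forall>z\<in>S. g z = k1 * f1 z + k2 * f2 z"
proof -
  obtain k1 where k1: "\<And>z. z \<in> S \<Longrightarrow> (f1 z * g' z - f1' z * g z) * \<mu> z = k1"
    using hyp_ode_wronskian_constant[OF S s1 sg nz \<mu>] by blast
  obtain k2 where k2: "\<And>z. z \<in> S \<Longrightarrow> (f2 z * g' z - f2' z * g z) * \<mu> z = k2"
    using hyp_ode_wronskian_constant[OF S s2 sg nz \<mu>] by blast
  have "g z = (- k2 / k) * f1 z + (k1 / k) * f2 z" if z: "z \<in> S" for z
  proof -
    have "g z * ((f1 z * f2' z - f1' z * f2 z) * \<mu> z) =
          f2 z * ((f1 z * g' z - f1' z * g z) * \<mu> z) - f1 z * ((f2 z * g' z - f2' z * g z) * \<mu> z)"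
      by (simp add: algebra_simps)
    then have "g z * k = f2 z * k1 - f1 z * k2" using k1[OF z] k2[OF z] W[OF z] by simp
    then show ?thesis using k by (simp add: field_simps)
  qed
  then show ?thesis by blast
qed

section \<open>The logarithmic solution for \<open>c = 1\<close>\<close>

text \<open>\<open>hyp_log_weight a b n = \<psi>(a+n) - \<psi>(a) + \<psi>(b+n) - \<psi>(b) - 2(\<psi>(n+1) - \<psi>(1))\<close>;
  the second solution at 0 is \<open>F(a,b;1;z) log z + \<Sum>\<^sub>n F\<^sub>n(a,b;1) hyp_log_weight a b n z\<^sup>n\<close>.\<close>
definition hyp_log_weight :: "real \<Rightarrow> real \<Rightarrow> nat \<Rightarrow> real" where
  "hyp_log_weight a b n = (\<Sum>k<n. 1 / (real k + a) + 1 / (real k + b) - 2 / (real k + 1))"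

definition hyp_log_coeffs :: "real \<Rightarrow> real \<Rightarrow> nat \<Rightarrow> complex" where
  "hyp_log_coeffs a b n = complex_of_real (hyp_coeff a b 1 n * hyp_log_weight a b n)"

definition hyp_log_part :: "real \<Rightarrow> real \<Rightarrow> complex \<Rightarrow> complex" where
  "hyp_log_part a b = pser (hyp_log_coeffs a b)"

lemma hyp_log_weight_Suc:
  "hyp_log_weight a b (Suc n) = hyp_log_weight a b n + (1 / (real n + a) + 1 / (real n + b) - 2 / (real n + 1))"
  by (simp add: hyp_log_weight_def add_ac)

lemma abs_hyp_log_weight_le:
  assumes "a > 0" "b > 0"
  shows "\<bar>hyp_log_weight a b n\<bar> \<le> real n * (1 / a + 1 / b + 2)"
proof -
  have "\<bar>hyp_log_weight a b n\<bar> \<le> (\<Sum>k<n. \<bar>1 / (real k + a) + 1 / (real k + b) - 2 / (real k + 1)\<bar>)"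
    unfolding hyp_log_weight_def by (rule sum_abs)
  also have "\<dots> \<le> (\<Sum>k<n. 1 / a + 1 / b + 2)"
  proof (rule sum_mono)
    fix k :: nat
    have "1 / (real k + a) \<le> 1 / a" "1 / (real k + b) \<le> 1 / b" "2 / (real k + 1) \<le> 2"
      using assms by (auto simp: field_simps)
    moreover have "1 / (real k + a) \<ge> 0" "1 / (real k + b) \<ge> 0" "2 / (real k + 1) \<ge> (0::real)"
      using assms by auto
    ultimately show "\<bar>1 / (real k + a) + 1 / (real k + b) - 2 / (real k + 1)\<bar> \<le> 1 / a + 1 / b + 2"
      by linarith
  qed
  finally show ?thesis by simp
qed

lemma summable_hyp_log_coeffs:
  assumes "a > 0" "b > 0" "norm z < 1"
  shows "summable (\<lambda>n. hyp_log_coeffs a b n * z ^ n)"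
proof -
  define M where "M = 1 / a + 1 / b + 2"
  have "(\<lambda>n. (of_nat n * hyp_coeffs a b 1 n) * complex_of_real (norm z) ^ n) sums
      (of_real (norm z) * pser (diffs (hyp_coeffs a b 1)) (of_real (norm z)))"
    by (rule pser_diffs_sums(2)) (use assms summable_hyp_coeffs in auto)
  from sums_summable[OF sums_Re[OF this]]
  have "summable (\<lambda>n. real n * hyp_coeff a b 1 n * norm z ^ n)"
    by (simp add: hyp_coeffs_def flip: of_real_power)
  then have "summable (\<lambda>n. M * (real n * hyp_coeff a b 1 n * norm z ^ n))"
    by (rule summable_mult)
  moreover have "norm (hyp_log_coeffs a b n * z ^ n) \<le> M * (real n * hyp_coeff a b 1 n * norm z ^ n)" for n
  proof -
    have h: "hyp_coeff a b 1 n > 0" using hyp_coeff_pos assms by auto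
    have "norm (hyp_log_coeffs a b n * z ^ n) = hyp_coeff a b 1 n * \<bar>hyp_log_weight a b n\<bar> * norm z ^ n"
      using h by (simp add: hyp_log_coeffs_def norm_mult norm_power abs_mult)
    also have "\<dots> \<le> hyp_coeff a b 1 n * (real n * M) * norm z ^ n"
      using abs_hyp_log_weight_le[OF assms(1,2), of n] h unfolding M_def
      by (intro mult_right_mono mult_left_mono) auto
    finally show ?thesis by (simp add: mult_ac)
  qed
  ultimately show ?thesis
    by (rule summable_comparison_test'[where N = 0])
qed

lemma hyp_log_coeffs_rec:
  assumes "a > 0" "b > 0"
  shows "(of_nat n + 1) * (of_real 1 + of_nat n) * hyp_log_coeffs a b (Suc n)
           - (of_real a + of_nat n) * (of_real b + of_nat n) * hyp_log_coeffs a b n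
       = - 2 * ((of_nat n + 1) * hyp_coeffs a b 1 (Suc n)) + 2 * (of_nat n * hyp_coeffs a b 1 n)
           + (of_real a + of_real b) * hyp_coeffs a b 1 n"
proof -
  define H A B Q where "H = hyp_coeff a b 1 n" "A = a + real n" "B = b + real n" "Q = real n + 1"
  have p: "A \<noteq> 0" "B \<noteq> 0" "Q \<noteq> 0" using assms unfolding H_A_B_Q_def by auto
  have r: "Q * Q * hyp_coeff a b 1 (Suc n) = A * B * H"
    using hyp_coeff_rec[of 1 n a b] unfolding H_A_B_Q_def by (simp add: mult_ac add_ac)
  have w: "hyp_log_weight a b (Suc n) = hyp_log_weight a b n + (1 / A + 1 / B - 2 / Q)"
    unfolding hyp_log_weight_Suc H_A_B_Q_def by (simp add: add_ac)
  have "Q * Q * (hyp_coeff a b 1 (Suc n) * hyp_log_weight a b (Suc n)) - A * B * (H * hyp_log_weight a b n)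
      = (Q * Q * hyp_coeff a b 1 (Suc n)) * hyp_log_weight a b (Suc n) - A * B * (H * hyp_log_weight a b n)"
    by (simp only: mult_ac)
  also have "\<dots> = A * B * H * (1 / A + 1 / B - 2 / Q)"
    unfolding r w by (simp add: algebra_simps)
  also have "\<dots> = (A + B) * H - 2 * (Q * hyp_coeff a b 1 (Suc n))"
    using p r by (simp add: field_simps)
  finally have "Q * Q * (hyp_coeff a b 1 (Suc n) * hyp_log_weight a b (Suc n)) - A * B * (H * hyp_log_weight a b n)
      = (A + B) * H - 2 * (Q * hyp_coeff a b 1 (Suc n))" .
  from arg_cong[OF this, of complex_of_real] show ?thesis
    unfolding H_A_B_Q_def by (simp add: hyp_log_coeffs_def hyp_coeffs_def algebra_simps)
qed

lemma hyp_operator_hyp_log_part: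
  assumes ab: "a > 0" "b > 0" and z: "norm z < 1"
  shows "hyp_operator a b 1 z (hyp_log_part a b z) (pser (diffs (hyp_log_coeffs a b)) z)
           (pser (diffs (diffs (hyp_log_coeffs a b))) z)
       = - 2 * pser (diffs (hyp_coeffs a b 1)) z + 2 * (z * pser (diffs (hyp_coeffs a b 1)) z)
           + (of_real a + of_real b) * hyp2F1 a b 1 z"
proof -
  have smh: "\<And>z. norm z < 1 \<Longrightarrow> summable (\<lambda>n. hyp_coeffs a b 1 n * z ^ n)"
    using summable_hyp_coeffs ab by simp
  have L: "(\<lambda>n. ((of_nat n + 1) * (of_real 1 + of_nat n) * hyp_log_coeffs a b (Suc n)
          - (of_real a + of_nat n) * (of_real b + of_nat n) * hyp_log_coeffs a b n) * z ^ n) sums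
       hyp_operator a b 1 z (hyp_log_part a b z) (pser (diffs (hyp_log_coeffs a b)) z)
           (pser (diffs (diffs (hyp_log_coeffs a b))) z)"
    using hyp_operator_pser_sums[OF summable_hyp_log_coeffs[OF ab] z, of 1 a b]
    by (simp add: hyp_log_part_def)
  have R: "(\<lambda>n. (- 2) * (((of_nat n + 1) * hyp_coeffs a b 1 (Suc n)) * z ^ n) + 2 * ((of_nat n * hyp_coeffs a b 1 n) * z ^ n)
       + (of_real a + of_real b) * (hyp_coeffs a b 1 n * z ^ n)) sums
       (- 2 * pser (diffs (hyp_coeffs a b 1)) z + 2 * (z * pser (diffs (hyp_coeffs a b 1)) z)
         + (of_real a + of_real b) * hyp2F1 a b 1 z)"
    unfolding hyp2F1_def by (intro sums_add sums_mult pser_diffs_sums[OF smh z] pser_sums smh z)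
  have "((of_nat n + 1) * (of_real 1 + of_nat n) * hyp_log_coeffs a b (Suc n)
          - (of_real a + of_nat n) * (of_real b + of_nat n) * hyp_log_coeffs a b n) * z ^ n =
        (- 2) * (((of_nat n + 1) * hyp_coeffs a b 1 (Suc n)) * z ^ n) + 2 * ((of_nat n * hyp_coeffs a b 1 n) * z ^ n)
          + (of_real a + of_real b) * (hyp_coeffs a b 1 n * z ^ n)" for n
    unfolding hyp_log_coeffs_rec[OF ab] by (simp add: algebra_simps)
  then show ?thesis using sums_unique2[OF _ R] L by presburger
qed

lemma hyp_operator_log_ansatz:
  assumes "z * iz = 1"
  shows "hyp_operator a b 1 z (y * L + h) (y' * L + y * iz + h') (y'' * L + 2 * (y' * iz) - y * (iz * iz) + h'')
       = L * hyp_operator a b 1 z y y' y'' + hyp_operator a b 1 z h h' h'' + (2 * (1 - z) * y' - (a + b) * y)"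
  using assms unfolding hyp_operator_def by algebra

lemma hyp_ode_solution_log:
  assumes ab: "a > 0" "b > 0" and S: "\<And>z. z \<in> S \<Longrightarrow> norm z < 1 \<and> z \<notin> \<real>\<^sub>\<le>\<^sub>0"
  shows "hyp_ode_solution a b 1 (\<lambda>z. hyp2F1 a b 1 z * Ln z + hyp_log_part a b z)
     (\<lambda>z. pser (diffs (hyp_coeffs a b 1)) z * Ln z + hyp2F1 a b 1 z * inverse z
          + pser (diffs (hyp_log_coeffs a b)) z)
     (\<lambda>z. pser (diffs (diffs (hyp_coeffs a b 1))) z * Ln z + 2 * (pser (diffs (hyp_coeffs a b 1)) z * inverse z)
          - hyp2F1 a b 1 z * (inverse z * inverse z) + pser (diffs (diffs (hyp_log_coeffs a b))) z) S"
  unfolding hyp_ode_solution_def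
proof safe
  fix z assume zS: "z \<in> S"
  have z1: "norm z < 1" and zr: "z \<notin> \<real>\<^sub>\<le>\<^sub>0" using S zS by auto
  then have z0: "z \<noteq> 0" by auto
  have d1: "(hyp2F1 a b 1 has_field_derivative pser (diffs (hyp_coeffs a b 1)) z) (at z)"
   and d2: "(pser (diffs (hyp_coeffs a b 1)) has_field_derivative pser (diffs (diffs (hyp_coeffs a b 1))) z) (at z)"
   and e: "hyp_operator a b 1 z (hyp2F1 a b 1 z) (pser (diffs (hyp_coeffs a b 1)) z)
             (pser (diffs (diffs (hyp_coeffs a b 1))) z) = 0"
    using hyp2F1_ode_solution[of a b 1] ab z1 unfolding hyp_ode_solution_def by auto
  have sm: "\<And>z. norm z < 1 \<Longrightarrow> summable (\<lambda>n. hyp_log_coeffs a b n * z ^ n)"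
    using summable_hyp_log_coeffs ab by blast
  have l1: "(hyp_log_part a b has_field_derivative pser (diffs (hyp_log_coeffs a b)) z) (at z)"
    unfolding hyp_log_part_def by (rule has_field_derivative_pser[OF sm z1])
  have l2: "(pser (diffs (hyp_log_coeffs a b)) has_field_derivative pser (diffs (diffs (hyp_log_coeffs a b))) z) (at z)"
    by (rule has_field_derivative_pser[OF summable_diffs[OF sm] z1])
  have dL: "(Ln has_field_derivative inverse z) (at z)" by (rule has_field_derivative_Ln[OF zr])
  have dI: "(inverse has_field_derivative - (inverse z * 1 * inverse z)) (at z)"
    by (rule DERIV_inverse'[OF DERIV_ident z0])
  show "((\<lambda>z. hyp2F1 a b 1 z * Ln z + hyp_log_part a b z) has_field_derivative
          pser (diffs (hyp_coeffs a b 1)) z * Ln z + hyp2F1 a b 1 z * inverse z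
          + pser (diffs (hyp_log_coeffs a b)) z) (at z)"
    by (rule DERIV_cong[OF DERIV_add[OF DERIV_mult[OF d1 dL] l1]]) simp
  show "((\<lambda>z. pser (diffs (hyp_coeffs a b 1)) z * Ln z + hyp2F1 a b 1 z * inverse z
          + pser (diffs (hyp_log_coeffs a b)) z) has_field_derivative
          pser (diffs (diffs (hyp_coeffs a b 1))) z * Ln z + 2 * (pser (diffs (hyp_coeffs a b 1)) z * inverse z)
          - hyp2F1 a b 1 z * (inverse z * inverse z) + pser (diffs (diffs (hyp_log_coeffs a b))) z) (at z)"
    by (rule DERIV_cong[OF DERIV_add[OF DERIV_add[OF DERIV_mult[OF d2 dL] DERIV_mult[OF d1 dI]] l2]])
       (simp add: algebra_simps)
  show "hyp_operator a b 1 z (hyp2F1 a b 1 z * Ln z + hyp_log_part a b z)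
     (pser (diffs (hyp_coeffs a b 1)) z * Ln z + hyp2F1 a b 1 z * inverse z + pser (diffs (hyp_log_coeffs a b)) z)
     (pser (diffs (diffs (hyp_coeffs a b 1))) z * Ln z + 2 * (pser (diffs (hyp_coeffs a b 1)) z * inverse z)
          - hyp2F1 a b 1 z * (inverse z * inverse z) + pser (diffs (diffs (hyp_log_coeffs a b))) z) = 0"
    unfolding hyp_operator_log_ansatz[OF right_inverse[OF z0]] e hyp_operator_hyp_log_part[OF ab z1]
    by (simp add: algebra_simps)
qed

section \<open>Connection formulas between the solutions at 0 and at 1\<close>

lemma ball_half_facts:
  fixes r :: complex
  assumes "r \<in> ball (1/2) (1/2)"
  shows "norm r < 1" "norm (1 - r) < 1" "r \<notin> \<real>\<^sub>\<le>\<^sub>0" "1 - r \<notin> \<real>\<^sub>\<le>\<^sub>0" "r * (1 - r) \<noteq> 0"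
proof -
  have d: "norm (r - 1/2) < 1/2" using assms by (simp add: dist_norm norm_minus_commute)
  have "\<bar>Re (r - 1/2)\<bar> \<le> norm (r - 1/2)" by (rule abs_Re_le_cmod)
  then have re: "\<bar>Re r - 1/2\<bar> < 1/2" using d by simp
  have "norm r \<le> norm (r - 1/2) + norm (1/2 :: complex)" using norm_triangle_ineq[of "r - 1/2" "1/2"] by simp
  then show "norm r < 1" using d by simp
  have "norm (1 - r) \<le> norm (1/2 - r) + norm (1/2 :: complex)" using norm_triangle_ineq[of "1/2 - r" "1/2"] by simp
  then show "norm (1 - r) < 1" using d by (simp add: norm_minus_commute)
  show "r \<notin> \<real>\<^sub>\<le>\<^sub>0" "1 - r \<notin> \<real>\<^sub>\<le>\<^sub>0" "r * (1 - r) \<noteq> 0"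
    using re by (auto simp: complex_nonpos_Reals_iff)
qed

lemma cball_quarter_subset_ball_1: "cball (1/4 :: complex) (1/4) \<subseteq> ball 0 1"
proof
  fix r :: complex assume "r \<in> cball (1/4) (1/4)"
  then have "norm (r - 1/4) \<le> 1/4" by (simp add: dist_norm norm_minus_commute)
  moreover have "norm r \<le> norm (r - 1/4) + norm (1/4 :: complex)" using norm_triangle_ineq[of "r - 1/4" "1/4"] by simp
  ultimately show "r \<in> ball 0 1" by simp
qed

lemma cball_quarter_one_minus_not_nonpos_Reals:
  fixes r :: complex
  assumes "r \<in> cball (1/4) (1/4)"
  shows "1 - r \<notin> \<real>\<^sub>\<le>\<^sub>0"
proof -
  have d: "norm (r - 1/4) \<le> 1/4" using assms by (simp add: dist_norm norm_minus_commute)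
  have "\<bar>Re (r - 1/4)\<bar> \<le> norm (r - 1/4)" by (rule abs_Re_le_cmod)
  then have "Re r \<le> 1/2" using d by simp
  then show ?thesis by (auto simp: complex_nonpos_Reals_iff)
qed

lemma ball_quarter_subset_ball_half: "ball (1/4 :: complex) (1/4) \<subseteq> ball (1/2) (1/2)"
proof
  fix r :: complex assume "r \<in> ball (1/4) (1/4)"
  then have "norm (r - 1/4) < 1/4" by (simp add: dist_norm norm_minus_commute)
  moreover have "norm (r - 1/2) \<le> norm (r - 1/4) + norm (1/4 :: complex)"
    using norm_triangle_ineq[of "r - 1/4" "-1/4"] by simp
  ultimately show "r \<in> ball (1/2) (1/2)" by (simp add: dist_norm norm_minus_commute)
qed

lemma continuous_on_cball_quarter_one_minus_powr:
  "continuous_on (cball (1/4 :: complex) (1/4)) (\<lambda>r. (1 - r) powr e)"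
proof (intro continuous_at_imp_continuous_on ballI)
  fix r :: complex assume "r \<in> cball (1/4) (1/4)"
  then have "1 - r \<notin> \<real>\<^sub>\<le>\<^sub>0" by (rule cball_quarter_one_minus_not_nonpos_Reals)
  then have "((\<lambda>r. (1 - r) powr e) has_field_derivative e * (1 - r) powr (e - 1) * (- 1)) (at r)"
    by (rule DERIV_chain2[where f="\<lambda>w. w powr e" and g="\<lambda>z. 1 - z", OF has_field_derivative_powr])
       (auto intro!: derivative_eq_intros)
  then show "isCont (\<lambda>r. (1 - r) powr e) r" by (rule DERIV_isCont)
qed

text \<open>The constant value of the weighted Wronskian is read off at the boundary point \<open>0\<close>
  by continuity.\<close>
lemma hyp_ode_solution_span_ball_half:
  fixes a b c :: complex
  assumes sg: "hyp_ode_solution a b c g g' g'' (ball (1/2) (1/2))"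
    and s1: "hyp_ode_solution a b c f1 f1' f1'' (ball (1/2) (1/2))"
    and s2: "hyp_ode_solution a b c f2 f2' f2'' (ball (1/2) (1/2))"
    and W: "\<And>z. z \<in> ball (1/2) (1/2) \<Longrightarrow>
              (f1 z * f2' z - f1' z * f2 z) * (z powr c * (1 - z) powr (a + b + 1 - c)) = E z"
    and E: "continuous_on (cball (1/4) (1/4)) E" "E 0 \<noteq> 0"
  shows "\<exists>k1 k2. \<forall>z\<in>ball (1/2) (1/2). g z = k1 * f1 z + k2 * f2 z"
proof -
  define \<mu> where "\<mu> = (\<lambda>z::complex. z powr c * (1 - z) powr (a + b + 1 - c))"
  have cvx: "convex (ball (1/2 :: complex) (1/2))" by simp
  have nz: "\<And>z::complex. z \<in> ball (1/2) (1/2) \<Longrightarrow> z * (1 - z) \<noteq> 0" using ball_half_facts by blast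
  have \<mu>: "(\<mu> has_field_derivative \<mu> z * (c - (a + b + 1) * z) / (z * (1 - z))) (at z)"
    if "z \<in> ball (1/2) (1/2)" for z
    unfolding \<mu>_def
    by (rule DERIV_cong[OF has_field_derivative_powr_weight]) (use ball_half_facts that in auto)
  obtain k where k: "\<And>z. z \<in> ball (1/2) (1/2) \<Longrightarrow> (f1 z * f2' z - f1' z * f2 z) * \<mu> z = k"
    using hyp_ode_wronskian_constant[OF cvx s1 s2 nz \<mu>] by blast
  have "\<And>z. z \<in> ball (1/4) (1/4) \<Longrightarrow> E z = k"
    using k W ball_quarter_subset_ball_half unfolding \<mu>_def by fastforce
  moreover have "(0::complex) \<in> closure (ball (1/4) (1/4))" by (simp add: dist_norm)
  ultimately have "E 0 = k"
    using continuous_constant_on_closure[of "ball (1/4) (1/4)" E k 0] E(1) by simp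
  then show ?thesis using hyp_ode_solution_span[OF cvx sg s1 s2 nz \<mu> k] E(2) by auto
qed

lemma hyp2F1_reflected_ode_solution:
  fixes A B C :: real
  assumes "A > 0" "B > 0" "C > 0"
  shows "hyp_ode_solution A B (A + B + 1 - C) (\<lambda>z. hyp2F1 A B C (1 - z))
     (\<lambda>z. - pser (diffs (hyp_coeffs A B C)) (1 - z)) (\<lambda>z. pser (diffs (diffs (hyp_coeffs A B C))) (1 - z))
     (ball (1/2) (1/2))"
  using hyp_ode_solution_reflect[OF hyp2F1_ode_solution[OF assms], of "ball (1/2) (1/2)"] ball_half_facts(2)
  by simp

lemma hyp2F1_ode_solution_ball_half:
  "A > 0 \<Longrightarrow> B > 0 \<Longrightarrow> C > 0 \<Longrightarrow> hyp_ode_solution A B C (hyp2F1 A B C)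
     (pser (diffs (hyp_coeffs A B C))) (pser (diffs (diffs (hyp_coeffs A B C)))) (ball (1/2) (1/2))"
  by (rule hyp_ode_solution_subset[OF hyp2F1_ode_solution]) (use ball_half_facts(1) in auto)

lemma hyp2F1_one_minus_connection:
  fixes A B C c :: real
  assumes c: "c = A + B + 1 - C"
    and pos: "A > 0" "B > 0" "C > 0" "c > 0" "c \<noteq> 1" "A - c + 1 > 0" "B - c + 1 > 0" "2 - c > 0"
  shows "\<exists>k1 k2. \<forall>r\<in>ball (1/2) (1/2). hyp2F1 A B C (1 - r) =
     k1 * hyp2F1 A B c r + k2 * (r powr (1 - of_real c) * hyp2F1 (A - c + 1) (B - c + 1) (2 - c) r)"
proof -
  define f f' where "f = hyp2F1 A B c" "f' = pser (diffs (hyp_coeffs A B c))"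
  define F F' where "F = hyp2F1 (A - c + 1) (B - c + 1) (2 - c)"
    "F' = pser (diffs (hyp_coeffs (A - c + 1) (B - c + 1) (2 - c)))"
  define e where "e = complex_of_real A + of_real B + 1 - of_real c"
  define E where "E = (\<lambda>r. (1 - r) powr e * ((1 - of_real c) * f r * F r + r * (f r * F' r - f' r * F r)))"
  have sg: "hyp_ode_solution A B c (\<lambda>z. hyp2F1 A B C (1 - z))
     (\<lambda>z. - pser (diffs (hyp_coeffs A B C)) (1 - z)) (\<lambda>z. pser (diffs (diffs (hyp_coeffs A B C))) (1 - z))
     (ball (1/2) (1/2))"
    using hyp2F1_reflected_ode_solution[OF pos(1-3)] unfolding c by simp
  have sF: "hyp_ode_solution (of_real A - of_real c + 1) (of_real B - of_real c + 1) (2 - of_real c) F F'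
      (pser (diffs (diffs (hyp_coeffs (A - c + 1) (B - c + 1) (2 - c))))) (ball (1/2) (1/2))"
    using hyp2F1_ode_solution_ball_half[OF pos(6-8)] unfolding F_F'_def by simp
  note s1 = hyp2F1_ode_solution_ball_half[OF pos(1,2,4), folded f_f'_def]
  note s2 = hyp_ode_solution_gauge[OF sF ball_half_facts(3)]
  have W: "(f z * ((1 - of_real c) * z powr (- of_real c) * F z + z powr (1 - of_real c) * F' z)
      - f' z * (z powr (1 - of_real c) * F z)) * (z powr of_real c * (1 - z) powr e) = E z"
    if "z \<in> ball (1/2) (1/2)" for z
  proof -
    have "z \<noteq> 0" using ball_half_facts(5)[OF that] by auto
    then have p: "z powr (- of_real c) * z powr of_real c = 1" "z powr (1 - of_real c) * z powr of_real c = z"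
      using powr_add[of z "- of_real c" "of_real c"] powr_add[of z "1 - of_real c" "of_real c"] by simp_all
    have "(f z * ((1 - of_real c) * z powr (- of_real c) * F z + z powr (1 - of_real c) * F' z)
        - f' z * (z powr (1 - of_real c) * F z)) * (z powr of_real c * (1 - z) powr e)
      = (1 - z) powr e * ((1 - of_real c) * f z * F z * (z powr (- of_real c) * z powr of_real c)
          + (f z * F' z - f' z * F z) * (z powr (1 - of_real c) * z powr of_real c))"
      by (simp add: algebra_simps)
    also have "\<dots> = E z" unfolding p E_def by (simp add: algebra_simps)
    finally show ?thesis .
  qed
  have "continuous_on (cball (1/4) (1/4)) E"
    unfolding E_def f_f'_def F_F'_def hyp2F1_def using pos
    by (intro continuous_intros continuous_on_cball_quarter_one_minus_powr
        continuous_on_pser[OF _ cball_quarter_subset_ball_1] summable_diffs summable_hyp_coeffs) auto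
  moreover have "E 0 \<noteq> 0" using pos(5) unfolding E_def f_f'_def F_F'_def by simp
  ultimately show ?thesis
    using hyp_ode_solution_span_ball_half[OF sg s1 s2 W[unfolded e_def]] unfolding f_f'_def F_F'_def by blast
qed

lemma hyp2F1_one_minus_connection_log:
  fixes A B C :: real
  assumes C: "A + B = C" and pos: "A > 0" "B > 0"
  shows "\<exists>k1 k2. \<forall>r\<in>ball (1/2) (1/2). hyp2F1 A B C (1 - r) =
     k1 * hyp2F1 A B 1 r + k2 * (hyp2F1 A B 1 r * Ln r + hyp_log_part A B r)"
proof -
  define f f' where "f = hyp2F1 A B 1" "f' = pser (diffs (hyp_coeffs A B 1))"
  define H' where "H' = pser (diffs (hyp_log_coeffs A B))"
  define e where "e = complex_of_real A + of_real B + 1 - 1"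
  define E where "E = (\<lambda>r. (1 - r) powr e * (f r * f r + r * (f r * H' r - f' r * hyp_log_part A B r)))"
  have sg: "hyp_ode_solution A B 1 (\<lambda>z. hyp2F1 A B C (1 - z))
     (\<lambda>z. - pser (diffs (hyp_coeffs A B C)) (1 - z)) (\<lambda>z. pser (diffs (diffs (hyp_coeffs A B C))) (1 - z))
     (ball (1/2) (1/2))"
    using hyp2F1_reflected_ode_solution[of A B C] pos unfolding C[symmetric] by simp
  have s1: "hyp_ode_solution A B 1 f f' (pser (diffs (diffs (hyp_coeffs A B 1)))) (ball (1/2) (1/2))"
    using hyp2F1_ode_solution_ball_half[of A B 1] pos unfolding f_f'_def by simp
  have s2: "hyp_ode_solution A B 1 (\<lambda>z. f z * Ln z + hyp_log_part A B z)
      (\<lambda>z. f' z * Ln z + f z * inverse z + H' z)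
      (\<lambda>z. pser (diffs (diffs (hyp_coeffs A B 1))) z * Ln z + 2 * (f' z * inverse z)
          - f z * (inverse z * inverse z) + pser (diffs (diffs (hyp_log_coeffs A B))) z) (ball (1/2) (1/2))"
    unfolding f_f'_def H'_def by (rule hyp_ode_solution_log[OF pos]) (use ball_half_facts in auto)
  have W: "(f z * (f' z * Ln z + f z * inverse z + H' z) - f' z * (f z * Ln z + hyp_log_part A B z))
      * (z powr 1 * (1 - z) powr e) = E z"
    if "z \<in> ball (1/2) (1/2)" for z
  proof -
    have "z \<noteq> 0" using ball_half_facts(5)[OF that] by auto
    then show ?thesis unfolding E_def by (simp add: field_simps)
  qed
  have "continuous_on (cball (1/4) (1/4)) E"
    unfolding E_def f_f'_def H'_def hyp2F1_def hyp_log_part_def using pos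
    by (intro continuous_intros continuous_on_cball_quarter_one_minus_powr
        continuous_on_pser[OF _ cball_quarter_subset_ball_1] summable_diffs summable_hyp_coeffs
        summable_hyp_log_coeffs) auto
  moreover have "E 0 \<noteq> 0" unfolding E_def f_f'_def by simp
  ultimately show ?thesis
    using hyp_ode_solution_span_ball_half[OF sg s1 s2 W[unfolded e_def]] unfolding f_f'_def by blast
qed

section \<open>An integral representation of \<open>\<Phi>\<close> by a hypergeometric function\<close>

lemma mult_sq_powr_eq_power:
  fixes x :: real and N :: nat
  assumes "x > 0" "N \<ge> 2"
  shows "x * (x\<^sup>2) powr ((real N - 3) / 2) = x ^ (N - 2)"
proof -
  have "(x\<^sup>2) powr ((real N - 3) / 2) = (x powr 2) powr ((real N - 3) / 2)"
    using assms by (simp add: powr_realpow)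
  also have "\<dots> = x powr (2 * ((real N - 3) / 2))" by (simp add: powr_powr)
  also have "2 * ((real N - 3) / 2) = real N - 3" by simp
  finally have "x * (x\<^sup>2) powr ((real N - 3) / 2) = x * x powr (real N - 3)" by simp
  also have "\<dots> = x powr (1 + (real N - 3))" using assms by (simp add: powr_mult_base)
  also have "1 + (real N - 3) = real (N - 2)" using assms by (simp add: of_nat_diff)
  also have "x powr real (N - 2) = x ^ (N - 2)" by (rule powr_realpow) (use assms in simp)
  finally show ?thesis .
qed

lemma cos_image_0_pi: "cos ` {0..pi} = {-1..1}"
proof safe
  fix x :: real
  assume "x \<in> {-1..1}"
  then show "x \<in> cos ` {0..pi}"
    using arccos_lbound arccos_ubound
    by (intro image_eqI[where x="arccos x"]) auto
qed simp_all

lemma integral_substitute_cos: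
  fixes N :: nat and a t :: real
  assumes N: "N \<ge> 2" and pos: "\<And>\<theta>. 1 + t\<^sup>2 - 2 * t * cos \<theta> > 0"
  shows "integral {-1..1} (\<lambda>u. (1 - u\<^sup>2) powr ((real N - 3) / 2) / (1 + t\<^sup>2 - 2 * t * u) powr a)
       = integral {0..pi} (\<lambda>\<theta>. sin \<theta> ^ (N - 2) / (1 + t\<^sup>2 - 2 * t * cos \<theta>) powr a)"
proof -
  define f where "f = (\<lambda>u. (1 - u\<^sup>2) powr ((real N - 3) / 2) / (1 + t\<^sup>2 - 2 * t * u) powr a)"
  define h where "h = (\<lambda>\<theta>. sin \<theta> ^ (N - 2) / (1 + t\<^sup>2 - 2 * t * cos \<theta>) powr a)"
  define k where "k = (\<lambda>\<theta>. \<bar>- sin \<theta>\<bar> * f (cos \<theta>))"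
  have ch: "continuous_on {0..pi} h"
  proof -
    have pz: "\<And>\<theta>. 1 + t\<^sup>2 \<noteq> 2 * t * cos \<theta>" using pos by (metis less_irrefl diff_self)
    show ?thesis unfolding h_def by (intro continuous_intros) (simp_all add: pz pos)
  qed
  then have hi: "h absolutely_integrable_on {0..pi}" by (rule absolutely_integrable_continuous_real)
  have kh: "k \<theta> = h \<theta>" if "\<theta> \<in> {0..pi} - {0, pi}" for \<theta>
  proof -
    have th: "0 < \<theta>" "\<theta> < pi" using that by auto
    have sp: "sin \<theta> > 0" using sin_gt_zero[OF th] .
    have "1 - (cos \<theta>)\<^sup>2 = (sin \<theta>)\<^sup>2" by (simp add: sin_squared_eq)
    then have "k \<theta> = sin \<theta> * ((sin \<theta>)\<^sup>2) powr ((real N - 3) / 2) / (1 + t\<^sup>2 - 2 * t * cos \<theta>) powr a"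
      unfolding k_def f_def using sp by simp
    also have "\<dots> = h \<theta>" unfolding h_def using mult_sq_powr_eq_power[OF sp N] by simp
    finally show ?thesis .
  qed
  have ki: "k absolutely_integrable_on {0..pi}"
    by (rule absolutely_integrable_spike[OF hi, of "{0, pi}"]) (use kh in auto)
  have kint: "integral {0..pi} k = integral {0..pi} h"
    by (rule integral_spike[of "{0, pi}"]) (use kh in auto)
  have der: "(cos has_field_derivative - sin x) (at x within {0..pi})" for x
    by (auto intro!: derivative_eq_intros)
  have inj: "inj_on cos {0..pi}" by (auto intro!: inj_onI cos_inj_pi)
  have "f absolutely_integrable_on (cos ` {0..pi}) \<and> integral (cos ` {0..pi}) f = integral {0..pi} k"
    using has_absolute_integral_change_of_variables_1'[of "{0..pi}" cos "\<lambda>x. - sin x" f "integral {0..pi} k", OF _ der inj]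
      ki unfolding k_def by simp
  then show ?thesis using kint unfolding cos_image_0_pi f_def h_def by simp
qed

lemma has_real_derivative_sin_power: "((\<lambda>x. sin x ^ Suc n) has_real_derivative (real (Suc n) * sin x ^ n * cos x)) (at x within S)"
  by (rule DERIV_cong[OF DERIV_power_Suc[OF has_field_derivative_at_within[OF DERIV_sin]]]) (simp add: algebra_simps)

lemma has_real_derivative_cos_power: "((\<lambda>x. cos x ^ Suc n) has_real_derivative (real (Suc n) * cos x ^ n * (- sin x))) (at x within S)"
  by (rule DERIV_cong[OF DERIV_power_Suc[OF has_field_derivative_at_within[OF DERIV_cos]]]) (simp add: algebra_simps)

definition sin_cos_moment :: "nat \<Rightarrow> nat \<Rightarrow> real" where
  "sin_cos_moment n k = integral {0..pi} (\<lambda>\<theta>. sin \<theta> ^ n * cos \<theta> ^ k)"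

lemma sin_cos_moment_integrable: "(\<lambda>\<theta>. sin \<theta> ^ n * cos \<theta> ^ k) integrable_on {0..pi}"
  by (intro integrable_continuous_real continuous_intros)

lemma sin_cos_moment_rec: "(real n + 2 + real k) * sin_cos_moment n (k + 2) = (real k + 1) * sin_cos_moment n k"
proof -
  define F where "F = (\<lambda>\<theta>::real. sin \<theta> ^ Suc n * cos \<theta> ^ Suc k)"
  define F' where "F' = (\<lambda>\<theta>::real. (real n + 2 + real k) * (sin \<theta> ^ n * cos \<theta> ^ (k + 2)) - (real k + 1) * (sin \<theta> ^ n * cos \<theta> ^ k))"
  have d: "(F has_vector_derivative F' x) (at x within {0..pi})" for x
  proof -
    have "(F has_real_derivative (real (Suc n) * sin x ^ n * cos x * cos x ^ Suc k + sin x ^ Suc n * (real (Suc k) * cos x ^ k * - sin x))) (at x within {0..pi})"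
      unfolding F_def by (rule DERIV_cong[OF DERIV_mult[OF has_real_derivative_sin_power has_real_derivative_cos_power]]) simp
    moreover have "real (Suc n) * sin x ^ n * cos x * cos x ^ Suc k + sin x ^ Suc n * (real (Suc k) * cos x ^ k * - sin x) = F' x"
    proof -
      have "sin x ^ Suc n * (real (Suc k) * cos x ^ k * - sin x) = - (real k + 1) * sin x ^ n * cos x ^ k * (sin x)\<^sup>2"
        by (simp add: power2_eq_square algebra_simps)
      also have "(sin x)\<^sup>2 = 1 - (cos x)\<^sup>2" by (rule sin_squared_eq)
      finally show ?thesis unfolding F'_def by (simp add: power2_eq_square algebra_simps)
    qed
    ultimately show ?thesis by (simp add: has_real_derivative_iff_has_vector_derivative)
  qed
  have "(F' has_integral F pi - F 0) {0..pi}"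
    by (rule fundamental_theorem_of_calculus) (use d pi_ge_zero in auto)
  then have "integral {0..pi} F' = 0" unfolding F_def by (simp add: integral_unique)
  moreover have "integral {0..pi} F' = (real n + 2 + real k) * sin_cos_moment n (k + 2) - (real k + 1) * sin_cos_moment n k"
  proof -
    have i1: "(\<lambda>\<theta>. (real n + 2 + real k) * (sin \<theta> ^ n * cos \<theta> ^ (k + 2))) integrable_on {0..pi}"
      by (intro integrable_continuous_real continuous_intros)
    have i2: "(\<lambda>\<theta>. (real k + 1) * (sin \<theta> ^ n * cos \<theta> ^ k)) integrable_on {0..pi}"
      by (intro integrable_continuous_real continuous_intros)
    show ?thesis unfolding F'_def sin_cos_moment_def integral_diff[OF i1 i2] integral_mult_right ..
  qed
  ultimately show ?thesis by simp
qed

lemma sin_cos_moment_1: "sin_cos_moment n 1 = 0"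
proof -
  define F where "F = (\<lambda>\<theta>::real. sin \<theta> ^ Suc n / (real n + 1))"
  have d: "(F has_vector_derivative (sin x ^ n * cos x ^ 1)) (at x within {0..pi})" for x
  proof -
    have "(F has_real_derivative (real (Suc n) * sin x ^ n * cos x / (real n + 1))) (at x within {0..pi})"
      unfolding F_def by (rule DERIV_cdivide[OF has_real_derivative_sin_power])
    moreover have "real (Suc n) * sin x ^ n * cos x / (real n + 1) = sin x ^ n * cos x ^ 1"
      by (simp add: field_simps)
    ultimately show ?thesis by (simp add: has_real_derivative_iff_has_vector_derivative)
  qed
  have "((\<lambda>x. sin x ^ n * cos x ^ 1) has_integral F pi - F 0) {0..pi}"
    by (rule fundamental_theorem_of_calculus) (use d pi_ge_zero in auto)
  then show ?thesis unfolding sin_cos_moment_def F_def by (simp add: integral_unique)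
qed

lemma sin_cos_moment_odd: "sin_cos_moment n (2 * j + 1) = 0"
proof (induction j)
  case 0 then show ?case using sin_cos_moment_1 by simp
next
  case (Suc j)
  have "(real n + 2 + real (2 * j + 1)) * sin_cos_moment n (2 * j + 1 + 2) = (real (2 * j + 1) + 1) * sin_cos_moment n (2 * j + 1)"
    by (rule sin_cos_moment_rec)
  then have "(real n + 2 + real (2 * j + 1)) * sin_cos_moment n (2 * Suc j + 1) = 0" using Suc by simp
  moreover have "real n + 2 + real (2 * j + 1) \<noteq> 0" by simp
  ultimately show ?case by simp
qed

lemma sin_cos_moment_0_pos: "sin_cos_moment n 0 > 0"
proof -
  have i: "(\<lambda>\<theta>. sin \<theta> ^ n) integrable_on {0..pi}"
    using sin_cos_moment_integrable[of n 0] by simp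
  have "integral {pi/6..5*pi/6} (\<lambda>\<theta>::real. (1/2::real) ^ n) \<le> integral {pi/6..5*pi/6} (\<lambda>\<theta>. sin \<theta> ^ n)"
  proof (rule integral_le)
    show "(\<lambda>\<theta>::real. (1/2::real) ^ n) integrable_on {pi/6..5*pi/6}" by (rule integrable_const_ivl)
    show "(\<lambda>\<theta>. sin \<theta> ^ n) integrable_on {pi/6..5*pi/6}"
      by (intro integrable_continuous_real continuous_intros)
    fix x assume x: "x \<in> {pi/6..5*pi/6}"
    have "sin x \<ge> 1/2"
    proof (cases "x \<le> pi/2")
      case True
      have "sin (pi/6) \<le> sin x" using x True by (intro sin_monotone_2pi_le) auto
      then show ?thesis by (simp add: sin_30)
    next
      case False
      have "sin (pi - x) \<ge> sin (pi/6)" using x False by (intro sin_monotone_2pi_le) auto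
      then show ?thesis by (simp add: sin_30)
    qed
    then show "(1/2) ^ n \<le> sin x ^ n" by (intro power_mono) auto
  qed
  moreover have "integral {pi/6..5*pi/6} (\<lambda>\<theta>::real. (1/2::real) ^ n) > 0"
  proof -
    have "integral {pi/6..5*pi/6} (\<lambda>\<theta>::real. (1/2::real) ^ n) = (2 * pi / 3) * (1/2) ^ n"
      by (simp add: real_scaleR_def)
    moreover have "(2 * pi / 3) * (1/2::real) ^ n > 0" using pi_gt_zero by (intro mult_pos_pos) auto
    ultimately show ?thesis by linarith
  qed
  moreover have "integral {pi/6..5*pi/6} (\<lambda>\<theta>. sin \<theta> ^ n) \<le> integral {0..pi} (\<lambda>\<theta>. sin \<theta> ^ n)"
    by (rule integral_subset_le) (use i pi_gt_zero in \<open>auto intro!: integrable_on_subinterval[OF i] zero_le_power sin_ge_zero\<close>)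
  ultimately have "integral {0..pi} (\<lambda>\<theta>. sin \<theta> ^ n) > 0" by (meson less_le_trans)
  then show ?thesis unfolding sin_cos_moment_def by simp
qed

lemma binomial_sin_cos_moment_even:
  fixes a :: real
  shows "pochhammer a (2 * j) / fact (2 * j) * sin_cos_moment n (2 * j) = sin_cos_moment n 0 * hyp_coeff (a / 2) ((a + 1) / 2) ((real n + 2) / 2) j"
proof (induction j)
  case 0 then show ?case by simp
next
  case (Suc j)
  define P where "P = pochhammer a (2 * j)"
  define Fj where "Fj = (fact (2 * j) :: real)"
  define M where "M = sin_cos_moment n (2 * j)"
  have Fj0: "Fj > 0" unfolding Fj_def by simp
  have p: "pochhammer a (2 * Suc j) = P * (a + 2 * j) * (a + 2 * j + 1)"
    unfolding P_def by (simp add: pochhammer_Suc algebra_simps)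
  have f: "(fact (2 * Suc j) :: real) = Fj * (2 * j + 1) * (2 * j + 2)"
    unfolding Fj_def by (simp add: algebra_simps)
  have m: "sin_cos_moment n (2 * Suc j) = M * (2 * j + 1) / (real n + 2 + 2 * j)"
  proof -
    have "(real n + 2 + real (2 * j)) * sin_cos_moment n (2 * j + 2) = (real (2 * j) + 1) * sin_cos_moment n (2 * j)" by (rule sin_cos_moment_rec)
    moreover have "real n + 2 + real (2 * j) > 0" by simp
    ultimately show ?thesis unfolding M_def by (simp add: field_simps)
  qed
  have h: "hyp_coeff (a / 2) ((a + 1) / 2) ((real n + 2) / 2) (Suc j) =
      hyp_coeff (a / 2) ((a + 1) / 2) ((real n + 2) / 2) j * ((a / 2 + j) * ((a + 1) / 2 + j)) / (((real n + 2) / 2 + j) * (j + 1))"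
    by (rule hyp_coeff_Suc) (simp add: add_pos_nonneg)
  have IH: "P / Fj * M = sin_cos_moment n 0 * hyp_coeff (a / 2) ((a + 1) / 2) ((real n + 2) / 2) j"
    using Suc.IH unfolding P_def Fj_def M_def .
  define B1 where "B1 = a / 2 + real j"
  define B2 where "B2 = (a + 1) / 2 + real j"
  define B3 where "B3 = (real n + 2) / 2 + real j"
  define B4 where "B4 = real j + 1"
  define Q1 where "Q1 = 2 * real j + 1"
  have B3p: "B3 > 0" "B4 > 0" "Q1 > 0" unfolding B3_def B4_def Q1_def by (auto intro: add_pos_nonneg)
  have e1: "a + 2 * real j = 2 * B1" "a + 2 * real j + 1 = 2 * B2" "2 * real j + 2 = 2 * B4"
     "real n + 2 + 2 * real j = 2 * B3" unfolding B1_def B2_def B3_def B4_def by (simp_all add: field_simps)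
  have "pochhammer a (2 * Suc j) / fact (2 * Suc j) * sin_cos_moment n (2 * Suc j)
      = P * (2 * B1) * (2 * B2) / (Fj * Q1 * (2 * B4)) * (M * Q1 / (2 * B3))"
    unfolding p f m e1[symmetric] Q1_def by simp
  also have "\<dots> = (P / Fj * M) * (B1 * B2) / (B3 * B4)"
    using Fj0 B3p by (simp add: field_simps)
  also have "\<dots> = sin_cos_moment n 0 * hyp_coeff (a / 2) ((a + 1) / 2) ((real n + 2) / 2) j * ((a / 2 + j) * ((a + 1) / 2 + j)) / (((real n + 2) / 2 + j) * (j + 1))"
    unfolding IH B1_def B2_def B3_def B4_def by (simp add: algebra_simps)
  also have "\<dots> = sin_cos_moment n 0 * hyp_coeff (a / 2) ((a + 1) / 2) ((real n + 2) / 2) (Suc j)"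
    unfolding h by simp
  finally show ?case .
qed

lemma sums_pochhammer_binomial:
  fixes a x :: real
  assumes "a > 0" "\<bar>x\<bar> < 1"
  shows "(\<lambda>k. pochhammer a k / fact k * x ^ k) sums (1 - x) powr (- a)"
proof -
  have "(\<lambda>k. ((- a) gchoose k) * (- x) ^ k) sums (1 + - x) powr (- a)"
    by (rule gen_binomial_real) (use assms in simp)
  moreover have "((- a) gchoose k) * (- x) ^ k = pochhammer a k / fact k * x ^ k" for k
    by (simp add: gbinomial_pochhammer power_mult_distrib[symmetric])
  ultimately show ?thesis by simp
qed

lemma sums_integral_Weierstrass:
  fixes f :: "nat \<Rightarrow> real \<Rightarrow> real"
  assumes bound: "\<And>k x. x \<in> {a..b} \<Longrightarrow> \<bar>f k x\<bar> \<le> M k" and M: "summable M"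
    and cont: "\<And>k. continuous_on {a..b} (f k)"
    and g: "\<And>x. x \<in> {a..b} \<Longrightarrow> (\<lambda>k. f k x) sums g x"
  shows "(\<lambda>k. integral {a..b} (f k)) sums integral {a..b} g"
proof -
  have "uniform_limit {a..b} (\<lambda>N x. \<Sum>k<N. f k x) (\<lambda>x. suminf (\<lambda>k. f k x)) sequentially"
    using bound by (intro Weierstrass_m_test[OF _ M]) auto
  moreover have "continuous_on {a..b} (\<lambda>x. \<Sum>k<N. f k x)" for N
    using cont by (intro continuous_intros)
  ultimately obtain I J where I: "\<And>N. ((\<lambda>x. \<Sum>k<N. f k x) has_integral I N) {a..b}"
    and J: "((\<lambda>x. suminf (\<lambda>k. f k x)) has_integral J) {a..b}" and IJ: "I \<longlonglongrightarrow> J"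
    by (rule uniform_limit_integral) auto
  have "I = (\<lambda>N. \<Sum>k<N. integral {a..b} (f k))"
    using has_integral_unique[OF I has_integral_sum[OF _ integrable_integral]]
      integrable_continuous_real[OF cont] by auto
  moreover have "(g has_integral J) {a..b}"
    using J g by (subst has_integral_cong[symmetric]) (auto simp: sums_iff)
  ultimately show ?thesis using IJ unfolding sums_def by (simp add: integral_unique)
qed

lemma sums_integral_sin_power_binomial:
  fixes n :: nat and a z :: real
  assumes a: "a > 0" and z: "\<bar>z\<bar> < 1"
  shows "(\<lambda>k. pochhammer a k / fact k * z ^ k * sin_cos_moment n k) sums
           integral {0..pi} (\<lambda>\<theta>. sin \<theta> ^ n * (1 - z * cos \<theta>) powr (- a))"
proof -
  define c where "c k = pochhammer a k / fact k" for k
  have c: "c k \<ge> 0" for k unfolding c_def using a by (simp add: pochhammer_pos less_imp_le)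
  have "(\<lambda>k. integral {0..pi} (\<lambda>\<theta>. sin \<theta> ^ n * (c k * (z * cos \<theta>) ^ k))) sums
      integral {0..pi} (\<lambda>\<theta>. sin \<theta> ^ n * (1 - z * cos \<theta>) powr (- a))"
  proof (rule sums_integral_Weierstrass)
    show "summable (\<lambda>k. c k * \<bar>z\<bar> ^ k)"
      unfolding c_def using sums_pochhammer_binomial[OF a, of "\<bar>z\<bar>"] z by (auto intro: sums_summable)
    fix k \<theta>
    have "\<bar>sin \<theta> ^ n * (c k * (z * cos \<theta>) ^ k)\<bar> = \<bar>sin \<theta>\<bar> ^ n * (c k * (\<bar>z\<bar> ^ k * \<bar>cos \<theta>\<bar> ^ k))"
      using c by (simp add: abs_mult power_abs power_mult_distrib)
    also have "\<dots> \<le> c k * (\<bar>z\<bar> ^ k * \<bar>cos \<theta>\<bar> ^ k)"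
      using c by (intro mult_left_le_one_le) (auto intro!: power_le_one simp: abs_sin_le_one)
    also have "\<dots> \<le> c k * \<bar>z\<bar> ^ k"
      using c by (intro mult_left_mono mult_right_le_one_le) (auto intro!: power_le_one simp: abs_cos_le_one)
    finally show "\<bar>sin \<theta> ^ n * (c k * (z * cos \<theta>) ^ k)\<bar> \<le> c k * \<bar>z\<bar> ^ k" .
    have "\<bar>z * cos \<theta>\<bar> < 1"
      using z abs_cos_le_one[of \<theta>] mult_left_le[of "\<bar>cos \<theta>\<bar>" "\<bar>z\<bar>"] by (simp add: abs_mult)
    from sums_mult[OF sums_pochhammer_binomial[OF a this], of "sin \<theta> ^ n"]
    show "(\<lambda>k. sin \<theta> ^ n * (c k * (z * cos \<theta>) ^ k)) sums (sin \<theta> ^ n * (1 - z * cos \<theta>) powr - a)"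
      unfolding c_def .
  qed (intro continuous_intros)
  moreover have "integral {0..pi} (\<lambda>\<theta>. sin \<theta> ^ n * (c k * (z * cos \<theta>) ^ k)) = c k * z ^ k * sin_cos_moment n k" for k
    unfolding sin_cos_moment_def integral_mult_right[symmetric]
    by (simp add: power_mult_distrib mult_ac)
  ultimately show ?thesis unfolding c_def by simp
qed

lemma one_plus_sq_minus_pos:
  fixes t u :: real
  assumes "\<bar>t\<bar> < 1" "\<bar>u\<bar> \<le> 1"
  shows "1 + t\<^sup>2 - 2 * t * u > 0"
proof -
  have "2 * t * u \<le> 2 * \<bar>t\<bar>"
  proof -
    have "2 * t * u \<le> \<bar>2 * t * u\<bar>" by simp
    also have "\<dots> = 2 * \<bar>t\<bar> * \<bar>u\<bar>" by (simp add: abs_mult)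
    also have "\<dots> \<le> 2 * \<bar>t\<bar> * 1" using assms(2) by (intro mult_left_mono) auto
    finally show ?thesis by simp
  qed
  moreover have "(1 - \<bar>t\<bar>)\<^sup>2 > 0" using assms(1) by simp
  moreover have "(1 - \<bar>t\<bar>)\<^sup>2 = 1 + t\<^sup>2 - 2 * \<bar>t\<bar>" by (simp add: power2_eq_square algebra_simps)
  ultimately show ?thesis by linarith
qed

lemma abs_two_mult_div_one_plus_sq_less_1:
  fixes t :: real
  assumes "\<bar>t\<bar> < 1"
  shows "\<bar>2 * t / (1 + t\<^sup>2)\<bar> < 1"
proof -
  have p: "1 + t\<^sup>2 > 0" by (simp add: add_pos_nonneg)
  have "(1 - \<bar>t\<bar>)\<^sup>2 > 0" using assms by simp
  moreover have "(1 - \<bar>t\<bar>)\<^sup>2 = 1 + t\<^sup>2 - 2 * \<bar>t\<bar>" by (simp add: power2_eq_square algebra_simps)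
  ultimately have l: "\<bar>2 * t\<bar> < 1 + t\<^sup>2" by (simp add: abs_mult)
  have "\<bar>2 * t / (1 + t\<^sup>2)\<bar> = \<bar>2 * t\<bar> / (1 + t\<^sup>2)" using p by (simp add: abs_divide)
  also have "\<dots> < 1" using l p by simp
  finally show ?thesis .
qed

lemma hyp2F1_of_real:
  assumes "a > 0" "b > 0" "c > 0" "\<bar>x\<bar> < 1"
  shows "(\<lambda>j. hyp_coeff a b c j * x ^ j) sums Re (hyp2F1 a b c (of_real x))"
    and "hyp2F1 a b c (of_real x) = of_real (Re (hyp2F1 a b c (of_real x)))"
proof -
  have "(\<lambda>j. hyp_coeffs a b c j * of_real x ^ j) sums hyp2F1 a b c (of_real x)"
    unfolding hyp2F1_def by (rule pser_sums[OF summable_hyp_coeffs]) (use assms in auto)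
  then have "(\<lambda>j. complex_of_real (hyp_coeff a b c j * x ^ j)) sums hyp2F1 a b c (of_real x)"
    by (simp add: hyp_coeffs_def)
  moreover from sums_Re[OF this]
  show re: "(\<lambda>j. hyp_coeff a b c j * x ^ j) sums Re (hyp2F1 a b c (of_real x))" by simp
  ultimately show "hyp2F1 a b c (of_real x) = of_real (Re (hyp2F1 a b c (of_real x)))"
    using sums_of_real[OF re] sums_unique2 by blast
qed

lemma hyp2F1_of_real_ge_1:
  assumes "a > 0" "b > 0" "c > 0" "0 \<le> x" "x < 1"
  shows "Re (hyp2F1 a b c (of_real x)) \<ge> 1"
proof -
  have S: "(\<lambda>j. hyp_coeff a b c j * x ^ j) sums Re (hyp2F1 a b c (of_real x))"
    by (rule hyp2F1_of_real(1)) (use assms in auto)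
  have "\<And>j. 0 \<le> hyp_coeff a b c j * x ^ j"
    using hyp_coeff_pos[OF assms(1-3)] assms(4) by (simp add: less_imp_le)
  then have "(\<Sum>j\<in>{0}. hyp_coeff a b c j * x ^ j) \<le> suminf (\<lambda>j. hyp_coeff a b c j * x ^ j)"
    using S by (intro sum_le_suminf) (auto simp: sums_iff)
  then show ?thesis using S by (simp add: sums_iff)
qed

text \<open>Odd moments vanish, and the even terms of the binomial expansion
  \<open>\<Sum>\<^sub>k (a)\<^sub>k/k! z\<^sup>k \<integral> sin\<^sup>n cos\<^sup>k\<close> are the terms of \<open>F(a/2, (a+1)/2; (n+2)/2; z\<^sup>2)\<close>.\<close>
lemma integral_sin_power_binomial_eq_hyp2F1:
  fixes n :: nat and a z :: real
  assumes a: "a > 0" and z: "\<bar>z\<bar> < 1"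
  shows "integral {0..pi} (\<lambda>\<theta>. sin \<theta> ^ n * (1 - z * cos \<theta>) powr (- a)) =
           sin_cos_moment n 0 * Re (hyp2F1 (a / 2) ((a + 1) / 2) ((real n + 2) / 2) (of_real (z\<^sup>2)))"
proof -
  define I where "I = integral {0..pi} (\<lambda>\<theta>. sin \<theta> ^ n * (1 - z * cos \<theta>) powr (- a))"
  have "(\<lambda>k. pochhammer a k / fact k * z ^ k * sin_cos_moment n k) sums I"
    unfolding I_def by (rule sums_integral_sin_power_binomial[OF a z])
  moreover have "pochhammer a k / fact k * z ^ k * sin_cos_moment n k = 0" if "k \<notin> range (\<lambda>j. 2 * j)" for k
  proof -
    from that obtain j where "k = 2 * j + 1" by (metis evenE oddE rangeI)
    then show ?thesis using sin_cos_moment_odd by simp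
  qed
  moreover have "strict_mono (\<lambda>j::nat. 2 * j)" by (rule strict_monoI) simp
  ultimately have "(\<lambda>j. pochhammer a (2 * j) / fact (2 * j) * z ^ (2 * j) * sin_cos_moment n (2 * j)) sums I"
    using sums_mono_reindex[of "\<lambda>j. 2 * j" "\<lambda>k. pochhammer a k / fact k * z ^ k * sin_cos_moment n k"]
    by blast
  moreover have "pochhammer a (2 * j) / fact (2 * j) * z ^ (2 * j) * sin_cos_moment n (2 * j) =
        sin_cos_moment n 0 * (hyp_coeff (a / 2) ((a + 1) / 2) ((real n + 2) / 2) j * (z\<^sup>2) ^ j)" for j
  proof -
    have "pochhammer a (2 * j) / fact (2 * j) * z ^ (2 * j) * sin_cos_moment n (2 * j) =
        (pochhammer a (2 * j) / fact (2 * j) * sin_cos_moment n (2 * j)) * (z\<^sup>2) ^ j"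
      unfolding power_mult by (simp only: mult_ac)
    then show ?thesis unfolding binomial_sin_cos_moment_even by (simp only: mult_ac)
  qed
  ultimately have "(\<lambda>j. sin_cos_moment n 0 * (hyp_coeff (a / 2) ((a + 1) / 2) ((real n + 2) / 2) j * (z\<^sup>2) ^ j))
      sums I" by simp
  moreover have "(\<lambda>j. sin_cos_moment n 0 * (hyp_coeff (a / 2) ((a + 1) / 2) ((real n + 2) / 2) j * (z\<^sup>2) ^ j)) sums
       (sin_cos_moment n 0 * Re (hyp2F1 (a / 2) ((a + 1) / 2) ((real n + 2) / 2) (of_real (z\<^sup>2))))"
    using a z by (intro sums_mult hyp2F1_of_real(1)) (auto simp: abs_square_less_1 add_pos_nonneg)
  ultimately show ?thesis unfolding I_def using sums_unique2 by blast
qed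

lemma Phi_eq_hyp2F1:
  fixes N :: nat and s t :: real
  assumes N: "N \<ge> 2" and aN: "2 * s < real N" and t: "\<bar>t\<bar> < 1"
  shows "Phi N s t = sphere_measure (N - 1) * sin_cos_moment (N - 2) 0 * (1 + t\<^sup>2) powr (- (real N / 2 - s)) *
           Re (hyp2F1 ((real N / 2 - s) / 2) ((real N / 2 - s + 1) / 2) (real N / 2) (of_real ((2 * t / (1 + t\<^sup>2))\<^sup>2)))"
proof -
  define a z where "a = real N / 2 - s" "z = 2 * t / (1 + t\<^sup>2)"
  have a: "a > 0" using aN unfolding a_z_def by simp
  have z: "\<bar>z\<bar> < 1" unfolding a_z_def by (rule abs_two_mult_div_one_plus_sq_less_1[OF t])
  have p: "1 + t\<^sup>2 > 0" by (simp add: add_pos_nonneg)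
  have pos: "\<And>\<theta>. 1 + t\<^sup>2 - 2 * t * cos \<theta> > 0" using one_plus_sq_minus_pos[OF t] abs_cos_le_one by blast
  have integrand: "sin \<theta> ^ (N - 2) / (1 + t\<^sup>2 - 2 * t * cos \<theta>) powr a =
      (1 + t\<^sup>2) powr (- a) * (sin \<theta> ^ (N - 2) * (1 - z * cos \<theta>) powr (- a))" for \<theta>
  proof -
    have e: "1 + t\<^sup>2 - 2 * t * cos \<theta> = (1 + t\<^sup>2) * (1 - z * cos \<theta>)"
      unfolding a_z_def using p by (simp add: field_simps)
    have "1 - z * cos \<theta> > 0" using pos[of \<theta>] p unfolding e by (simp add: zero_less_mult_iff)
    then have "(1 + t\<^sup>2 - 2 * t * cos \<theta>) powr a = (1 + t\<^sup>2) powr a * (1 - z * cos \<theta>) powr a"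
      unfolding e using p by (simp add: powr_mult)
    then show ?thesis using p \<open>1 - z * cos \<theta> > 0\<close> by (simp add: powr_minus field_simps)
  qed
  have "Phi N s t = sphere_measure (N - 1) *
      integral {0..pi} (\<lambda>\<theta>. sin \<theta> ^ (N - 2) / (1 + t\<^sup>2 - 2 * t * cos \<theta>) powr a)"
    unfolding Phi_def a_z_def integral_substitute_cos[OF N pos] ..
  also have "\<dots> = sphere_measure (N - 1) * ((1 + t\<^sup>2) powr (- a) *
      (sin_cos_moment (N - 2) 0 * Re (hyp2F1 (a / 2) ((a + 1) / 2) (real N / 2) (of_real (z\<^sup>2)))))"
    using integral_sin_power_binomial_eq_hyp2F1[OF a z, of "N - 2"] N
    unfolding integrand integral_mult_right by (simp add: of_nat_diff)
  finally show ?thesis unfolding a_z_def by (simp only: mult_ac)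
qed

section \<open>Real parts of holomorphic functions on the real axis\<close>

lemma has_real_derivative_Re_of_real:
  assumes "(G has_field_derivative G') (at (complex_of_real x))"
  shows "((\<lambda>x. Re (G (of_real x))) has_real_derivative Re G') (at x)"
proof -
  have d1: "(complex_of_real has_derivative complex_of_real) (at x)"
    by (rule bounded_linear.has_derivative[OF bounded_linear_of_real has_derivative_ident])
  have d2: "(G has_derivative (\<lambda>h. G' * h)) (at (complex_of_real x))"
    using assms by (simp add: has_field_derivative_def mult_commute_abs)
  have "((\<lambda>x. G (of_real x)) has_derivative (\<lambda>h. G' * of_real h)) (at x)"
    using has_derivative_compose[OF d1 d2] by (simp add: o_def)
  then have "((\<lambda>x. Re (G (of_real x))) has_derivative (\<lambda>h. Re (G' * of_real h))) (at x)"
    by (rule has_derivative_Re)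
  moreover have "(\<lambda>h. Re (G' * of_real h)) = (\<lambda>h. Re G' * h)" by (auto simp: mult.commute)
  ultimately show ?thesis by (simp add: has_field_derivative_def mult_commute_abs)
qed

lemma smooth_on_Re_holomorphic:
  assumes F: "F holomorphic_on U" and U: "open U" and S: "\<And>x. x \<in> S \<Longrightarrow> complex_of_real x \<in> U"
  shows "smooth_on (\<lambda>x. Re (F (of_real x))) S"
  unfolding smooth_on_def
proof (intro exI conjI allI ballI)
  show "(\<lambda>n x. Re ((deriv ^^ n) F (of_real x))) 0 = (\<lambda>x. Re (F (of_real x)))" by simp
  fix n x assume x: "x \<in> S"
  have h: "(deriv ^^ n) F holomorphic_on U" by (rule holomorphic_higher_deriv[OF F U])
  have "((deriv ^^ n) F has_field_derivative deriv ((deriv ^^ n) F) (of_real x)) (at (of_real x))"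
    by (rule holomorphic_derivI[OF h U S[OF x]])
  then show "((\<lambda>x. Re ((deriv ^^ n) F (of_real x))) has_real_derivative Re ((deriv ^^ Suc n) F (of_real x))) (at x)"
    using has_real_derivative_Re_of_real by simp
qed

lemma real_analytic_on_Re_holomorphic:
  assumes F: "F holomorphic_on U" and U: "open U" and S: "\<And>x. x \<in> S \<Longrightarrow> complex_of_real x \<in> U"
    and Sopen: "open S" and eq: "\<And>x. x \<in> S \<Longrightarrow> f x = Re (F (of_real x))"
  shows "real_analytic_on f S"
  unfolding real_analytic_on_def
proof
  fix x0 assume x0: "x0 \<in> S"
  obtain r1 where r1: "r1 > 0" "ball (complex_of_real x0) r1 \<subseteq> U"
    using U S[OF x0] open_contains_ball by blast
  obtain r2 where r2: "r2 > 0" "ball x0 r2 \<subseteq> S"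
    using Sopen x0 open_contains_ball by blast
  define r where "r = min r1 r2"
  have r: "r > 0" unfolding r_def using r1 r2 by simp
  define c where "c = (\<lambda>n. Re ((deriv ^^ n) F (of_real x0) / fact n))"
  have "\<forall>x. \<bar>x - x0\<bar> < r \<longrightarrow> (\<lambda>n. c n * (x - x0) ^ n) sums f x"
  proof (intro allI impI)
    fix x assume x: "\<bar>x - x0\<bar> < r"
    have hb: "F holomorphic_on ball (complex_of_real x0) r1" using F r1(2) holomorphic_on_subset by blast
    have "complex_of_real x \<in> ball (complex_of_real x0) r1"
      using x unfolding r_def by (simp add: dist_norm abs_minus_commute flip: of_real_diff)
    then have "(\<lambda>n. (deriv ^^ n) F (of_real x0) / fact n * (of_real x - of_real x0) ^ n) sums F (of_real x)"
      by (rule holomorphic_power_series[OF hb])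
    then have "(\<lambda>n. Re ((deriv ^^ n) F (of_real x0) / fact n * (of_real x - of_real x0) ^ n)) sums Re (F (of_real x))"
      by (rule sums_Re)
    moreover have "Re ((deriv ^^ n) F (of_real x0) / fact n * (of_real x - of_real x0) ^ n) = c n * (x - x0) ^ n" for n
    proof -
      have "(complex_of_real x - complex_of_real x0) ^ n = complex_of_real ((x - x0) ^ n)" by simp
      then have "(deriv ^^ n) F (of_real x0) / fact n * (of_real x - of_real x0) ^ n =
         ((deriv ^^ n) F (of_real x0) / fact n) * complex_of_real ((x - x0) ^ n)" by simp
      moreover have "Re (W * complex_of_real y) = Re W * y" for W y by simp
      ultimately show ?thesis unfolding c_def by presburger
    qed
    moreover have "x \<in> S" using x r2(2) unfolding r_def by (auto simp: dist_norm subset_iff abs_minus_commute)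
    ultimately show "(\<lambda>n. c n * (x - x0) ^ n) sums f x" using eq by simp
  qed
  then show "\<exists>r>0. \<exists>a. \<forall>x. \<bar>x - x0\<bar> < r \<longrightarrow> (\<lambda>n. a n * (x - x0) ^ n) sums f x"
    using r by blast
qed

lemma sphere_measure_pos: "n \<ge> 1 \<Longrightarrow> sphere_measure n > 0"
  unfolding sphere_measure_def by (intro divide_pos_pos mult_pos_pos) auto

lemma Phi_inverse:
  fixes N :: nat and s t :: real
  assumes t: "t > 0"
  shows "Phi N s (1 / t) = t powr (real N - 2 * s) * Phi N s t"
proof -
  define a where "a = real N / 2 - s"
  have "integral {-1..1} (\<lambda>u. (1 - u\<^sup>2) powr ((real N - 3) / 2) / (1 + (1 / t)\<^sup>2 - 2 * (1 / t) * u) powr a)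
      = integral {-1..1} (\<lambda>u. t powr (real N - 2 * s) * ((1 - u\<^sup>2) powr ((real N - 3) / 2) / (1 + t\<^sup>2 - 2 * t * u) powr a))"
  proof (rule integral_cong)
    fix u :: real
    have e: "1 + (1 / t)\<^sup>2 - 2 * (1 / t) * u = (1 + t\<^sup>2 - 2 * t * u) / t\<^sup>2"
      using t by (simp add: field_simps power2_eq_square)
    have tp: "(t\<^sup>2) powr a = t powr (real N - 2 * s)"
    proof -
      have "(t\<^sup>2) powr a = (t powr 2) powr a" using t by (simp add: powr_realpow)
      also have "\<dots> = t powr (2 * a)" by (simp add: powr_powr)
      finally show ?thesis unfolding a_def by (simp add: algebra_simps)
    qed
    have d: "(1 + (1 / t)\<^sup>2 - 2 * (1 / t) * u) powr a = (1 + t\<^sup>2 - 2 * t * u) powr a / t powr (real N - 2 * s)"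
      unfolding e powr_divide tp ..
    show "(1 - u\<^sup>2) powr ((real N - 3) / 2) / (1 + (1 / t)\<^sup>2 - 2 * (1 / t) * u) powr a =
        t powr (real N - 2 * s) * ((1 - u\<^sup>2) powr ((real N - 3) / 2) / (1 + t\<^sup>2 - 2 * t * u) powr a)"
      unfolding d by (simp add: divide_divide_eq_right mult.commute mult.left_commute)
  qed
  then show ?thesis unfolding Phi_def a_def[symmetric] integral_mult_right by (simp only: mult_ac)
qed

lemma complex_one_plus_sq_powr_of_real:
  "(1 + (complex_of_real t)\<^sup>2) powr complex_of_real e = of_real ((1 + t\<^sup>2) powr e)"
proof -
  have "1 + (complex_of_real t)\<^sup>2 = of_real (1 + t\<^sup>2)" "1 + t\<^sup>2 > 0" by (simp_all add: add_pos_nonneg)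
  then show ?thesis using powr_of_real[of "1 + t\<^sup>2" e] by simp
qed

lemma Phi_pos:
  fixes N :: nat and s t :: real
  assumes N: "N \<ge> 2" and aN: "2 * s < real N" and t: "\<bar>t\<bar> < 1"
  shows "Phi N s t > 0"
proof -
  have "Re (hyp2F1 ((real N / 2 - s) / 2) ((real N / 2 - s + 1) / 2) (real N / 2)
      (of_real ((2 * t / (1 + t\<^sup>2))\<^sup>2))) \<ge> 1"
    using aN N abs_two_mult_div_one_plus_sq_less_1[OF t]
    by (intro hyp2F1_of_real_ge_1) (auto simp: abs_square_less_1)
  moreover have "sphere_measure (N - 1) * sin_cos_moment (N - 2) 0 > 0"
    using N by (intro mult_pos_pos sphere_measure_pos sin_cos_moment_0_pos) auto
  moreover have "1 + t\<^sup>2 > 0" by (simp add: add_pos_nonneg)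
  then have "(1 + t\<^sup>2) powr (- (real N / 2 - s)) > 0" by simp
  ultimately show ?thesis unfolding Phi_eq_hyp2F1[OF N aN t] by simp
qed

text \<open>On \<open>(-1, 1)\<close>, \<open>\<Phi>\<close> is the restriction of the holomorphic function
  \<open>C (1 + t\<^sup>2)\<^bsup>-a\<^esup> F(W t)\<close> with \<open>W t = (2t/(1+t\<^sup>2))\<^sup>2\<close>, on the open set where \<open>Re (1 + t\<^sup>2) > 0\<close>
  and \<open>|W t| < 1\<close>.\<close>
lemma Phi_real_analytic:
  fixes N :: nat and s :: real
  assumes N: "N \<ge> 2" and aN: "2 * s < real N"
  shows "real_analytic_on (Phi N s) {-1<..<1}"
proof -
  define a A B C where "a = real N / 2 - s" "A = a / 2" "B = (a + 1) / 2"
    "C = sphere_measure (N - 1) * sin_cos_moment (N - 2) 0"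
  define W where "W = (\<lambda>t::complex. (2 * t / (1 + t\<^sup>2))\<^sup>2)"
  define H where "H = {t::complex. 0 < Re (1 + t\<^sup>2)}"
  define U where "U = H \<inter> W -` ball 0 1"
  define F where "F = (\<lambda>t. of_real C * ((1 + t\<^sup>2) powr of_real (- a) * hyp2F1 A B (real N / 2) (W t)))"
  have pars: "A > 0" "B > 0" "real N / 2 > 0" using aN N unfolding a_A_B_C_def by auto
  have nz: "1 + t\<^sup>2 \<notin> \<real>\<^sub>\<le>\<^sub>0" "1 + t\<^sup>2 \<noteq> 0" if "t \<in> H" for t
  proof -
    have "Re (1 + t\<^sup>2) > 0" using that unfolding H_def by simp
    then show "1 + t\<^sup>2 \<notin> \<real>\<^sub>\<le>\<^sub>0" by (auto simp: complex_nonpos_Reals_iff)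
    from \<open>Re (1 + t\<^sup>2) > 0\<close> show "1 + t\<^sup>2 \<noteq> 0" by (metis less_irrefl zero_complex.sel(1))
  qed
  have "continuous_on H W" unfolding W_def by (intro continuous_intros) (use nz in auto)
  moreover have "open H" unfolding H_def by (intro open_Collect_less continuous_intros)
  ultimately have U: "open U" unfolding U_def by (rule continuous_open_preimage[OF _ _ open_ball])
  have "W holomorphic_on U" unfolding W_def U_def by (intro holomorphic_intros) (use nz in auto)
  then have "(\<lambda>t. hyp2F1 A B (real N / 2) (W t)) holomorphic_on U"
    using holomorphic_on_compose_gen[OF _ holomorphic_on_hyp2F1[OF pars]] unfolding U_def o_def
    by blast
  then have FU: "F holomorphic_on U"
    unfolding F_def by (intro holomorphic_intros) (use nz in \<open>auto simp: U_def\<close>)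
  have W_of_real: "W (of_real x) = of_real ((2 * x / (1 + x\<^sup>2))\<^sup>2)" for x unfolding W_def by simp
  have inU: "complex_of_real x \<in> U" if "x \<in> {-1<..<1}" for x
  proof -
    have "\<bar>(2 * x / (1 + x\<^sup>2))\<^sup>2\<bar> < 1"
      using abs_two_mult_div_one_plus_sq_less_1[of x] that by (simp add: abs_square_less_1 abs_less_iff)
    then have "W (of_real x) \<in> ball 0 1" unfolding W_of_real by (simp only: mem_ball_0 norm_of_real)
    then show ?thesis unfolding U_def H_def by (simp add: add_pos_nonneg)
  qed
  have eq: "Phi N s x = Re (F (of_real x))" if "x \<in> {-1<..<1}" for x
  proof -
    have "Phi N s x = C * (1 + x\<^sup>2) powr (- a) * Re (hyp2F1 A B (real N / 2) (of_real ((2 * x / (1 + x\<^sup>2))\<^sup>2)))"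
      using Phi_eq_hyp2F1[OF N aN, of x] that unfolding a_A_B_C_def by auto
    then show ?thesis unfolding F_def W_of_real complex_one_plus_sq_powr_of_real by simp
  qed
  show ?thesis by (rule real_analytic_on_Re_holomorphic[OF FU U inU _ eq]) auto
qed

text \<open>For real \<open>t\<close>, \<open>1 - (2t/(1+t\<^sup>2))\<^sup>2 = rho t = ((1 - t) qfac t)\<^sup>2\<close>: near \<open>t = 1\<close> the
  singular factor of \<open>F\<close> at \<open>1\<close> becomes a power or logarithm of \<open>1 - t\<close> times a function
  holomorphic near the positive reals.\<close>
definition rho :: "complex \<Rightarrow> complex" where
  "rho t = ((1 - t\<^sup>2) / (1 + t\<^sup>2))\<^sup>2"

definition qfac :: "complex \<Rightarrow> complex" where
  "qfac t = (1 + t) / (1 + t\<^sup>2)"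

definition rho_domain :: "complex set" where
  "rho_domain = ({t. 0 < Re (1 + t\<^sup>2)} \<inter> rho -` ball 0 1) \<inter> qfac -` {z. 0 < Re z}"

lemma rho_domain_facts:
  shows "open rho_domain" "\<And>x. x > 0 \<Longrightarrow> complex_of_real x \<in> rho_domain"
    "rho holomorphic_on rho_domain" "rho ` rho_domain \<subseteq> ball 0 1"
    "qfac holomorphic_on rho_domain" "\<And>t. t \<in> rho_domain \<Longrightarrow> qfac t \<notin> \<real>\<^sub>\<le>\<^sub>0"
    "\<And>t. t \<in> rho_domain \<Longrightarrow> 1 + t\<^sup>2 \<notin> \<real>\<^sub>\<le>\<^sub>0"
proof -
  define H where "H = {t::complex. 0 < Re (1 + t\<^sup>2)}"
  have H: "1 + t\<^sup>2 \<noteq> 0" "1 + t\<^sup>2 \<notin> \<real>\<^sub>\<le>\<^sub>0" if "t \<in> H" for t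
  proof -
    have "Re (1 + t\<^sup>2) > 0" using that unfolding H_def by simp
    then show "1 + t\<^sup>2 \<notin> \<real>\<^sub>\<le>\<^sub>0" by (auto simp: complex_nonpos_Reals_iff)
    from \<open>Re (1 + t\<^sup>2) > 0\<close> show "1 + t\<^sup>2 \<noteq> 0" by (metis less_irrefl zero_complex.sel(1))
  qed
  have "continuous_on H rho" unfolding rho_def by (intro continuous_intros) (use H in auto)
  moreover have "open H" unfolding H_def by (intro open_Collect_less continuous_intros)
  ultimately have o1: "open (H \<inter> rho -` ball 0 1)" by (rule continuous_open_preimage[OF _ _ open_ball])
  have "continuous_on (H \<inter> rho -` ball 0 1) qfac" unfolding qfac_def by (intro continuous_intros) (use H in auto)
  moreover have "open {z::complex. 0 < Re z}" by (intro open_Collect_less continuous_intros)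
  ultimately show "open rho_domain"
    unfolding rho_domain_def H_def[symmetric] by (rule continuous_open_preimage[OF _ o1])
  have sub: "rho_domain \<subseteq> H" unfolding rho_domain_def H_def by auto
  show "rho holomorphic_on rho_domain" unfolding rho_def by (intro holomorphic_intros) (use H sub in auto)
  show "qfac holomorphic_on rho_domain" unfolding qfac_def by (intro holomorphic_intros) (use H sub in auto)
  show "rho ` rho_domain \<subseteq> ball 0 1" unfolding rho_domain_def by auto
  show "\<And>t. t \<in> rho_domain \<Longrightarrow> qfac t \<notin> \<real>\<^sub>\<le>\<^sub>0"
    unfolding rho_domain_def by (auto simp: complex_nonpos_Reals_iff)
  show "\<And>t. t \<in> rho_domain \<Longrightarrow> 1 + t\<^sup>2 \<notin> \<real>\<^sub>\<le>\<^sub>0" using H sub by blast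
  fix x :: real assume x: "x > 0"
  have p: "1 + x\<^sup>2 > 0" by (simp add: add_pos_nonneg)
  have "\<bar>1 - x\<^sup>2\<bar> < 1 + x\<^sup>2" using x by (auto simp: abs_less_iff)
  then have "\<bar>(1 - x\<^sup>2) / (1 + x\<^sup>2)\<bar> < 1" using p by (simp add: abs_divide)
  then have "((1 - x\<^sup>2) / (1 + x\<^sup>2))\<^sup>2 < 1" by (simp add: abs_square_less_1)
  moreover have "rho (of_real x) = of_real (((1 - x\<^sup>2) / (1 + x\<^sup>2))\<^sup>2)" unfolding rho_def by simp
  ultimately have "rho (of_real x) \<in> ball 0 1" by (simp only: mem_ball_0 norm_of_real) simp
  moreover have "0 < Re (qfac (of_real x))" unfolding qfac_def using x p by simp
  ultimately show "complex_of_real x \<in> rho_domain" unfolding rho_domain_def using p by simp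
qed

lemma rho_of_real_facts:
  fixes t :: real
  assumes t: "0 < t" "t < 1"
  defines "r \<equiv> ((1 - t\<^sup>2) / (1 + t\<^sup>2))\<^sup>2" and "q \<equiv> (1 + t) / (1 + t\<^sup>2)"
  shows "rho (of_real t) = of_real r" "qfac (of_real t) = of_real q"
    "(2 * t / (1 + t\<^sup>2))\<^sup>2 = 1 - r" "of_real r \<in> ball (1/2 :: complex) (1/2)" "q > 0" "r > 0"
    "\<And>e. r powr e = (1 - t) powr (2 * e) * q powr (2 * e)"
    "ln r = 2 * ln (1 - t) + 2 * ln q"
proof -
  show "rho (of_real t) = of_real r" "qfac (of_real t) = of_real q"
    unfolding rho_def qfac_def r_def q_def by simp_all
  have p: "1 + t\<^sup>2 > 0" by (simp add: add_pos_nonneg)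
  have "1 - r = ((1 + t\<^sup>2)\<^sup>2 - (1 - t\<^sup>2)\<^sup>2) / (1 + t\<^sup>2)\<^sup>2"
    unfolding r_def using p by (simp add: power_divide field_simps)
  also have "(1 + t\<^sup>2)\<^sup>2 - (1 - t\<^sup>2)\<^sup>2 = (2 * t)\<^sup>2" by algebra
  finally show "(2 * t / (1 + t\<^sup>2))\<^sup>2 = 1 - r" by (simp add: power_divide)
  show qp: "q > 0" unfolding q_def using t p by simp
  have "(1 - t\<^sup>2) / (1 + t\<^sup>2) = (1 - t) * q" unfolding q_def using p
    by (simp add: field_simps power2_eq_square)
  then have r2: "r = ((1 - t) * q)\<^sup>2" unfolding r_def by simp
  have pp: "(1 - t) * q > 0" using t qp by simp
  have "(1 - t\<^sup>2) / (1 + t\<^sup>2) < 1" using t p by simp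
  then have "(1 - t) * q < 1" using \<open>(1 - t\<^sup>2) / (1 + t\<^sup>2) = (1 - t) * q\<close> by simp
  then have r01: "0 < r" "r < 1" unfolding r2 using pp t qp by (simp_all add: power_less_one_iff)
  then show "0 < r" by simp
  moreover have "(1/2 :: complex) - complex_of_real r = complex_of_real (1/2 - r)" by simp
  then have "dist (1/2) (complex_of_real r) = \<bar>1/2 - r\<bar>" by (simp only: dist_norm norm_of_real)
  ultimately have "dist (1/2) (complex_of_real r) < 1/2" using r01 by linarith
  then show "of_real r \<in> ball (1/2 :: complex) (1/2)" by simp
  fix e :: real
  have "r powr e = (((1 - t) * q) powr 2) powr e" unfolding r2 using pp by (simp add: powr_realpow)
  also have "\<dots> = (1 - t) powr (2 * e) * q powr (2 * e)" by (simp add: powr_powr powr_mult)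
  finally show "r powr e = (1 - t) powr (2 * e) * q powr (2 * e)" .
  show "ln r = 2 * ln (1 - t) + 2 * ln q"
    unfolding r2 using t qp by (simp add: ln_mult ln_realpow)
qed

lemma Phi_eq_hyp2F1_one_minus_rho:
  fixes N :: nat and s t :: real
  assumes N: "N \<ge> 2" and aN: "2 * s < real N" and t: "0 < t" "t < 1"
  shows "Phi N s t = sphere_measure (N - 1) * sin_cos_moment (N - 2) 0 * (1 + t\<^sup>2) powr (- (real N / 2 - s)) *
           Re (hyp2F1 ((real N / 2 - s) / 2) ((real N / 2 - s + 1) / 2) (real N / 2) (1 - rho (of_real t)))"
proof -
  have "complex_of_real ((2 * t / (1 + t\<^sup>2))\<^sup>2) = 1 - rho (of_real t)"
    unfolding rho_of_real_facts(1,3)[OF t] by simp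
  then show ?thesis using Phi_eq_hyp2F1[OF N aN] t by simp
qed

lemma holomorphic_on_hyp2F1_rho:
  "A > 0 \<Longrightarrow> B > 0 \<Longrightarrow> C > 0 \<Longrightarrow> (\<lambda>t. hyp2F1 A B C (rho t)) holomorphic_on rho_domain"
  using holomorphic_on_compose_gen[OF rho_domain_facts(3) holomorphic_on_hyp2F1 rho_domain_facts(4)]
  by (simp add: o_def)

lemma Re_of_real_mult: "Re (of_real x * z) = x * Re z"
  by simp

lemma Phi_smooth_decomposition:
  assumes "\<Phi>1 holomorphic_on rho_domain" "\<Phi>2 holomorphic_on rho_domain"
    and "\<And>t. 0 < t \<Longrightarrow> t < 1 \<Longrightarrow> Phi N s t = Re (\<Phi>1 (of_real t)) + K s (1 - t) * Re (\<Phi>2 (of_real t))"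
  shows "\<exists>\<phi>1 \<phi>2 :: real \<Rightarrow> real. smooth_on \<phi>1 {0<..<sqrt 2} \<and> smooth_on \<phi>2 {0<..<sqrt 2} \<and>
           (\<forall>t\<in>{0<..<1}. Phi N s t = \<phi>1 t + K s (1 - t) * \<phi>2 t)"
proof (intro exI conjI)
  show "smooth_on (\<lambda>x. Re (\<Phi>1 (of_real x))) {0<..<sqrt 2}"
    by (rule smooth_on_Re_holomorphic[OF assms(1) rho_domain_facts(1)]) (use rho_domain_facts(2) in auto)
  show "smooth_on (\<lambda>x. Re (\<Phi>2 (of_real x))) {0<..<sqrt 2}"
    by (rule smooth_on_Re_holomorphic[OF assms(2) rho_domain_facts(1)]) (use rho_domain_facts(2) in auto)
qed (use assms(3) in auto)

text \<open>\<open>s \<noteq> 1/2\<close>: here \<open>c = A + B + 1 - N/2 = 3/2 - s\<close>, and \<open>rho\<^bsup>1-c\<^esup> = (1 - t)\<^bsup>2s-1\<^esup> qfac\<^bsup>2s-1\<^esup>\<close>.\<close>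
lemma Phi_decomposition_nonlog:
  fixes N :: nat and s :: real
  assumes N: "N \<ge> 2" and s: "0 < s" "s \<le> 1" "s \<noteq> 1/2" and aN: "2 * s < real N"
  shows "\<exists>\<phi>1 \<phi>2 :: real \<Rightarrow> real. smooth_on \<phi>1 {0<..<sqrt 2} \<and> smooth_on \<phi>2 {0<..<sqrt 2} \<and>
           (\<forall>t\<in>{0<..<1}. Phi N s t = \<phi>1 t + K s (1 - t) * \<phi>2 t)"
proof -
  define a A B C c where "a = real N / 2 - s" "A = a / 2" "B = (a + 1) / 2"
    "C = sphere_measure (N - 1) * sin_cos_moment (N - 2) 0" "c = 3 / 2 - s"
  have pos: "A > 0" "B > 0" "real N / 2 > 0" "c > 0" "c \<noteq> 1" "A - c + 1 > 0" "B - c + 1 > 0" "2 - c > 0"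
    using N s aN unfolding a_A_B_C_c_def by (auto simp: field_simps)
  have "c = A + B + 1 - real N / 2" unfolding a_A_B_C_c_def by (simp add: field_simps)
  from hyp2F1_one_minus_connection[OF this pos(1-3) pos(4-8)] obtain k1 k2
    where k: "\<And>r. r \<in> ball (1/2) (1/2) \<Longrightarrow> hyp2F1 A B (real N / 2) (1 - r) =
      k1 * hyp2F1 A B c r + k2 * (r powr (1 - of_real c) * hyp2F1 (A - c + 1) (B - c + 1) (2 - c) r)"
    by blast
  define \<Phi>1 where "\<Phi>1 = (\<lambda>t. of_real C * ((1 + t\<^sup>2) powr of_real (- a) * (k1 * hyp2F1 A B c (rho t))))"
  define \<Phi>2 where "\<Phi>2 = (\<lambda>t. of_real C * ((1 + t\<^sup>2) powr of_real (- a) *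
       (k2 * (qfac t powr of_real (2 * s - 1) * hyp2F1 (A - c + 1) (B - c + 1) (2 - c) (rho t)))))"
  have "\<Phi>1 holomorphic_on rho_domain" unfolding \<Phi>1_def
    by (intro holomorphic_intros holomorphic_on_hyp2F1_rho pos) (use rho_domain_facts(7) in auto)
  moreover have "\<Phi>2 holomorphic_on rho_domain" unfolding \<Phi>2_def
    by (intro holomorphic_intros holomorphic_on_hyp2F1_rho pos rho_domain_facts(5)) (use rho_domain_facts(6,7) in auto)
  ultimately show ?thesis
  proof (rule Phi_smooth_decomposition)
    fix t :: real assume t: "0 < t" "t < 1"
    define r q where "r = ((1 - t\<^sup>2) / (1 + t\<^sup>2))\<^sup>2" "q = (1 + t) / (1 + t\<^sup>2)"
    note rq = rho_of_real_facts[OF t, folded r_q_def]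
    have c: "1 - complex_of_real c = of_real (s - 1/2)" unfolding a_A_B_C_c_def by simp
    have rp: "complex_of_real r powr (1 - of_real c) = of_real ((1 - t) powr (2 * s - 1) * q powr (2 * s - 1))"
      unfolding c using powr_of_real[of r "s - 1/2"] rq(7)[of "s - 1/2"] rq(6) by (simp add: algebra_simps)
    have qp: "complex_of_real q powr of_real (2 * s - 1) = of_real (q powr (2 * s - 1))"
      using powr_of_real[of q "2 * s - 1"] rq(5) by simp
    have "K s (1 - t) = (1 - t) powr (2 * s - 1)" unfolding K_def using s(3) t by simp
    then have "hyp2F1 A B (real N / 2) (1 - rho (of_real t)) = k1 * hyp2F1 A B c (of_real r)
        + of_real (K s (1 - t)) * (k2 * (qfac (of_real t) powr of_real (2 * s - 1)
            * hyp2F1 (A - c + 1) (B - c + 1) (2 - c) (rho (of_real t))))"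
      unfolding rq(1,2) qp k[OF rq(4)] rp by (simp add: algebra_simps)
    then show "Phi N s t = Re (\<Phi>1 (of_real t)) + K s (1 - t) * Re (\<Phi>2 (of_real t))"
      unfolding Phi_eq_hyp2F1_one_minus_rho[OF N aN t] \<Phi>1_def \<Phi>2_def complex_one_plus_sq_powr_of_real
        a_A_B_C_c_def[symmetric]
      by (simp only: Re_of_real_mult plus_complex.sel rq(1)) (simp add: algebra_simps del: times_complex.sel)
  qed
qed

text \<open>\<open>s = 1/2\<close>: here \<open>A + B = N/2\<close>, and \<open>Ln rho = 2 ln (1 - t) + 2 Ln qfac\<close>.\<close>
lemma Phi_decomposition_log:
  fixes N :: nat and s :: real
  assumes N: "N \<ge> 2" and s: "s = 1/2" and aN: "2 * s < real N"
  shows "\<exists>\<phi>1 \<phi>2 :: real \<Rightarrow> real. smooth_on \<phi>1 {0<..<sqrt 2} \<and> smooth_on \<phi>2 {0<..<sqrt 2} \<and>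
           (\<forall>t\<in>{0<..<1}. Phi N s t = \<phi>1 t + K s (1 - t) * \<phi>2 t)"
proof -
  define a A B C where "a = real N / 2 - s" "A = a / 2" "B = (a + 1) / 2"
    "C = sphere_measure (N - 1) * sin_cos_moment (N - 2) 0"
  have pos: "A > 0" "B > 0" "(1::real) > 0" using aN unfolding a_A_B_C_def by auto
  have "A + B = real N / 2" unfolding a_A_B_C_def s by (simp add: field_simps)
  from hyp2F1_one_minus_connection_log[OF this pos(1,2)] obtain k1 k2
    where k: "\<And>r. r \<in> ball (1/2) (1/2) \<Longrightarrow> hyp2F1 A B (real N / 2) (1 - r) =
      k1 * hyp2F1 A B 1 r + k2 * (hyp2F1 A B 1 r * Ln r + hyp_log_part A B r)"
    by blast
  define \<Phi>1 where "\<Phi>1 = (\<lambda>t. of_real C * ((1 + t\<^sup>2) powr of_real (- a) *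
      (k1 * hyp2F1 A B 1 (rho t) + k2 * (hyp2F1 A B 1 (rho t) * (2 * Ln (qfac t)) + hyp_log_part A B (rho t)))))"
  define \<Phi>2 where "\<Phi>2 = (\<lambda>t. of_real C * ((1 + t\<^sup>2) powr of_real (- a) * (k2 * (2 * hyp2F1 A B 1 (rho t)))))"
  note F = holomorphic_on_hyp2F1_rho[OF pos]
  have "(\<lambda>t. hyp_log_part A B (rho t)) holomorphic_on rho_domain"
    using holomorphic_on_compose_gen[OF rho_domain_facts(3)
        holomorphic_on_pser[OF summable_hyp_log_coeffs[OF pos(1,2)]] rho_domain_facts(4)]
    by (simp add: o_def hyp_log_part_def)
  then have "\<Phi>1 holomorphic_on rho_domain" unfolding \<Phi>1_def
    by (intro holomorphic_intros F rho_domain_facts(5)) (use rho_domain_facts(6,7) in auto)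
  moreover have "\<Phi>2 holomorphic_on rho_domain" unfolding \<Phi>2_def
    by (intro holomorphic_intros F) (use rho_domain_facts(7) in auto)
  ultimately show ?thesis
  proof (rule Phi_smooth_decomposition)
    fix t :: real assume t: "0 < t" "t < 1"
    define r q where "r = ((1 - t\<^sup>2) / (1 + t\<^sup>2))\<^sup>2" "q = (1 + t) / (1 + t\<^sup>2)"
    note rq = rho_of_real_facts[OF t, folded r_q_def]
    have Lr: "Ln (complex_of_real r) = of_real (2 * ln (1 - t) + 2 * ln q)"
      using Ln_of_real[OF rq(6)] rq(8) by simp
    have "K s (1 - t) = ln (1 - t)" unfolding K_def using s t by simp
    then have "hyp2F1 A B (real N / 2) (1 - rho (of_real t)) =
        (k1 * hyp2F1 A B 1 (rho (of_real t)) + k2 * (hyp2F1 A B 1 (rho (of_real t)) * (2 * Ln (qfac (of_real t)))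
          + hyp_log_part A B (rho (of_real t))))
        + of_real (K s (1 - t)) * (k2 * (2 * hyp2F1 A B 1 (rho (of_real t))))"
      unfolding rq(1,2) k[OF rq(4)] Lr Ln_of_real[OF rq(5)] by (simp add: algebra_simps)
    then show "Phi N s t = Re (\<Phi>1 (of_real t)) + K s (1 - t) * Re (\<Phi>2 (of_real t))"
      unfolding Phi_eq_hyp2F1_one_minus_rho[OF N aN t] \<Phi>1_def \<Phi>2_def complex_one_plus_sq_powr_of_real
        a_A_B_C_def[symmetric]
      by (simp only: Re_of_real_mult plus_complex.sel) (simp add: algebra_simps del: times_complex.sel)
  qed
qed

theorem proposition5p1:
  fixes N :: nat and s :: real
  assumes "N \<ge> 2" and "0 < s" and "s \<le> 1" and "2 * s < real N"
  shows "real_analytic_on (Phi N s) {-1<..<1}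
         \<and> (\<forall>t\<in>{-1<..<1}. Phi N s t > 0)
         \<and> (\<exists>\<phi>1 \<phi>2 :: real \<Rightarrow> real.
               smooth_on \<phi>1 {0<..<sqrt 2} \<and> smooth_on \<phi>2 {0<..<sqrt 2} \<and>
               (\<forall>t\<in>{0<..<1}. Phi N s t = \<phi>1 t + K s (1 - t) * \<phi>2 t))
         \<and> (\<forall>t>0. Phi N s (1 / t) = t powr (real N - 2 * s) * Phi N s t)"
proof (intro conjI ballI allI impI)
  show "real_analytic_on (Phi N s) {-1<..<1}" by (rule Phi_real_analytic[OF assms(1,4)])
  show "Phi N s t > 0" if "t \<in> {-1<..<1}" for t
    using Phi_pos[OF assms(1,4)] that by (simp add: abs_less_iff)
  show "\<exists>\<phi>1 \<phi>2 :: real \<Rightarrow> real. smooth_on \<phi>1 {0<..<sqrt 2} \<and> smooth_on \<phi>2 {0<..<sqrt 2} \<and>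
          (\<forall>t\<in>{0<..<1}. Phi N s t = \<phi>1 t + K s (1 - t) * \<phi>2 t)"
  proof (cases "s = 1/2")
    case True
    then show ?thesis using Phi_decomposition_log[OF assms(1) True assms(4)] by blast
  next
    case False
    then show ?thesis using Phi_decomposition_nonlog[OF assms(1-3) False assms(4)] by blast
  qed
  show "Phi N s (1 / t) = t powr (real N - 2 * s) * Phi N s t" if "t > 0" for t
    by (rule Phi_inverse[OF that])
qed

end
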